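(* Let $n\ge 0$ and $h\ge 1$ be integers. The number $sc_h(\mathcal{D}_n)$ of saturated chains of length $h$ in the Dyck lattice $\mathcal{D}_n$ is $$ sc_h(\mathcal{D}_n)=\sum_{\gamma\in\mathcal{D}_n}\ \sum_{\lambda=(\lambda_1,\ldots,\lambda_k)\vdash h}\ \sum_{\substack{\gamma_1,\ldots,\gamma_k \text{ p.d.o. in } \gamma\\ (\forall i)(\exists \varphi_i\in SkFS(\lambda_i))\ b(\varphi_i)=\gamma_i}}\ \sum_{\substack{(\varphi_1,\ldots,\varphi_k)\in SkFS^k\\ (\forall i)\ (b(\varphi_i)=\gamma_i,\ A(\varphi_i)=\lambda_i)}} \binom{h}{A(\varphi_1),\ldots,A(\varphi_k)}\, t(\varphi_1)\cdots t(\varphi_k), $$ where $\binom{h}{a_1,\ldots,a_k}=\frac{h!}{a_1!\cdots a_k!}$ is the multinomial coefficient.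
   Context: A Dyck path of semilength $n$ is a lattice path from $(0,0)$ to $(2n,0)$ with steps $u=(1,1)$ and $d=(1,-1)$ never going below the $x$-axis; it is identified with a word over $\{u,d\}$. $\mathcal{D}_n$ denotes the set of Dyck paths of semilength $n$ partially ordered by containment: $\gamma\le\gamma'$ iff $\gamma$ lies weakly below $\gamma'$ in the plane. A saturated chain of length $h$ is a sequence $\gamma^{(0)}<\gamma^{(1)}<\cdots<\gamma^{(h)}$ in which each $\gamma^{(i+1)}$ covers $\gamma^{(i)}$. $\lambda\vdash h$ means $\lambda=(\lambda_1\ge\cdots\ge\lambda_k)$ is an integer partition of $h$. A skew Ferrers shape is a shape $\lambda/\mu$ (a Ferrers diagram with a Ferrers diagram removed from its top-left corner) that is strongly connected: every two consecutive rows share at least one column and every two consecutive columns share at least one row. $SkFS$ is the set of skew Ferrers shapes, $A(\varphi)$ is the number of cells of $\varphi$, and $SkFS(m)=\{\varphi\in SkFS: A(\varphi)=m\}$. A skew Ferrers shape is delimited by two lattice paths from its bottom-left corner to its top-right corner; encoding each horizontal unit step by $d$ and each vertical unit step by $u$, the one of these two words starting with $d$ is the lower border $b(\varphi)$. (Equivalently, after rotating by $45^\circ$, the region between two Dyck-type path segments with common endpoints is a skew Ferrers shape whose lower border is the factor of the lower path.) A skew Young tableau of shape $\varphi$ is a bijective filling of the cells of $\varphi$ with $1,\ldots,A(\varphi)$ that is strictly decreasing along each row and each column; $t(\varphi)$ is the number of skew Young tableaux of shape $\varphi$. Words $\gamma_1,\ldots,\gamma_k$ over $\{u,d\}$ form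 a set of pairwise disjoint occurrences (p.d.o.) in $\gamma$ when they occur as factors of $\gamma$ at pairwise non-overlapping positions; the third sum runs over such sets of occurrences (each set counted once, so occurrences assigned to equal parts of $\lambda$ are unordered). *)

theory Defs
  imports Main "HOL-Library.Multiset" "HOL-Library.FuncSet"
begin

text \<open>Steps of lattice paths: U = u = (1,1) (vertical unit step of a shape border),
  D = d = (1,-1) (horizontal unit step of a shape border).\<close>
datatype step = U | D

definition cnt :: "step \<Rightarrow> step list \<Rightarrow> nat" where
  "cnt s w = length (filter (\<lambda>x. x = s) w)"

definition ht :: "step list \<Rightarrow> nat \<Rightarrow> int" where
  "ht w k = int (cnt U (take k w)) - int (cnt D (take k w))"

definition dyck :: "nat \<Rightarrow> step list set" where
  "dyck n = {w. length w = 2 * n \<and> (\<forall>k \<le> length w. ht w k \<ge> 0) \<and> ht w (length w) = 0}"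

definition dyck_le :: "step list \<Rightarrow> step list \<Rightarrow> bool" where
  "dyck_le w w' \<longleftrightarrow> (\<forall>k \<le> length w. ht w k \<le> ht w' k)"

definition dyck_covers :: "nat \<Rightarrow> step list \<Rightarrow> step list \<Rightarrow> bool" where
  "dyck_covers n a b \<longleftrightarrow> a \<in> dyck n \<and> b \<in> dyck n \<and> dyck_le a b \<and> a \<noteq> b \<and>
     \<not> (\<exists>c \<in> dyck n. dyck_le a c \<and> dyck_le c b \<and> c \<noteq> a \<and> c \<noteq> b)"

definition sat_chains :: "nat \<Rightarrow> nat \<Rightarrow> step list list set" where
  "sat_chains n h = {cs. length cs = h + 1 \<and> set cs \<subseteq> dyck n \<and>
     (\<forall>i < h. dyck_covers n (cs ! i) (cs ! Suc i))}"

definition sc :: "nat \<Rightarrow> nat \<Rightarrow> nat" where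
  "sc h n = card (sat_chains n h)"

definition partitions :: "nat \<Rightarrow> nat list set" where
  "partitions h = {ls. sum_list ls = h \<and> sorted_wrt (\<ge>) ls \<and> 0 \<notin> set ls}"

text \<open>Skew Ferrers shapes (up to translation) are represented by the pair (P, Q) of
  their two border paths from the bottom-left corner to the top-right corner
  (D = horizontal unit step, U = vertical unit step): P (the lower border) starts with D,
  Q starts with U, they have the same end point, and P lies strictly below Q
  at every interior point; the latter encodes strong connectedness.\<close>
definition SkFS :: "(step list \<times> step list) set" where
  "SkFS = {(P, Q). length P = length Q \<and> cnt D P = cnt D Q \<and>
     P \<noteq> [] \<and> Q \<noteq> [] \<and> hd P = D \<and> hd Q = U \<and>
     (\<forall>k. 0 < k \<and> k < length P \<longrightarrow> cnt D (take k P) > cnt D (take k Q))}"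

definition lower_border :: "step list \<times> step list \<Rightarrow> step list" where
  "lower_border \<phi> = fst \<phi>"

text \<open>Height of a border path along column x (number of vertical steps before
  its (x+1)-th horizontal step).\<close>
definition col_ht :: "step list \<Rightarrow> nat \<Rightarrow> nat" where
  "col_ht w x = card {i. i < length w \<and> w ! i = U \<and> cnt D (take i w) \<le> x}"

text \<open>Cells (x, y) (lower-left corners of unit squares; y grows upwards)
  lying between the two borders.\<close>
definition cells :: "step list \<times> step list \<Rightarrow> (nat \<times> nat) set" where
  "cells \<phi> = {(x, y). x < cnt D (fst \<phi>) \<and> col_ht (fst \<phi>) x \<le> y \<and> y < col_ht (snd \<phi>) x}"

definition area :: "step list \<times> step list \<Rightarrow> nat" where
  "area \<phi> = card (cells \<phi>)"

definition tableaux :: "step list \<times> step list \<Rightarrow> (nat \<times> nat \<Rightarrow> nat) set" where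
  "tableaux \<phi> = {T. bij_betw T (cells \<phi>) {1..area \<phi>} \<and>
     (\<forall>c. c \<notin> cells \<phi> \<longrightarrow> T c = 0) \<and>
     (\<forall>x x' y. (x, y) \<in> cells \<phi> \<and> (x', y) \<in> cells \<phi> \<and> x < x' \<longrightarrow> T (x, y) > T (x', y)) \<and>
     (\<forall>x y y'. (x, y) \<in> cells \<phi> \<and> (x, y') \<in> cells \<phi> \<and> y < y' \<longrightarrow> T (x, y') > T (x, y))}"

definition t :: "step list \<times> step list \<Rightarrow> nat" where
  "t \<phi> = card (tableaux \<phi>)"

definition factor :: "step list \<Rightarrow> nat \<Rightarrow> nat \<Rightarrow> step list" where
  "factor w p l = take l (drop p w)"

text \<open>Sets of pairwise disjoint occurrences in gamma assigned to the parts of lambda: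
  a triple (p, l, a) is the occurrence of the factor of length l at position p,
  assigned to a part equal to a.  Each set of occurrences is counted once (occurrences
  assigned to equal parts are unordered).\<close>
definition pdo :: "step list \<Rightarrow> nat list \<Rightarrow> (nat \<times> nat \<times> nat) set set" where
  "pdo \<gamma> lam = {Occ. finite Occ \<and>
     (\<forall>(p, l, a) \<in> Occ. p + l \<le> length \<gamma>) \<and>
     (\<forall>(p, l, a) \<in> Occ. \<forall>(p', l', a') \<in> Occ. (p, l, a) \<noteq> (p', l', a') \<longrightarrow> p + l \<le> p' \<or> p' + l' \<le> p) \<and>
     image_mset (\<lambda>(p, l, a). a) (mset_set Occ) = mset lam \<and>
     (\<forall>(p, l, a) \<in> Occ. \<exists>\<phi> \<in> SkFS. area \<phi> = a \<and> lower_border \<phi> = factor \<gamma> p l)}"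

definition multinomial :: "nat \<Rightarrow> ('i \<Rightarrow> nat) \<Rightarrow> 'i set \<Rightarrow> nat" where
  "multinomial h a I = fact h div (\<Prod>i\<in>I. fact (a i))"

end

theory Submission
  imports Defs
begin

text \<open>Going down a cover relation of \<open>\<D>\<^sub>n\<close> removes one unit square under a peak, i.e. a square
  on which no other square between the paths rests. Hence the saturated chains from \<open>\<gamma>\<close> up to
  \<open>\<gamma>'\<close> are the linear extensions of the squares between \<open>\<gamma>\<close> and \<open>\<gamma>'\<close>, ordered by resting on
  each other. These squares split along the detours of \<open>\<gamma>'\<close> above \<open>\<gamma>\<close>; each detour is a skew
  Ferrers shape whose lower border is a factor of \<open>\<gamma>\<close>, its linear extensions are its skew Young
  tableaux, and squares of different detours are incomparable, so the linear extensions of the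
  whole region are shuffles counted by a multinomial coefficient. Conversely, replacing disjoint
  occurrences in \<open>\<gamma>\<close> by upper borders of shapes gives back \<open>\<gamma>'\<close>, so summing over \<open>\<gamma>'\<close> is summing
  over occurrences and shapes.\<close>

section \<open>Linear extensions of finite relations\<close>

text \<open>Linear extensions of the order generated by \<open>r\<close> on \<open>S\<close>, as labellings by \<open>1..card S\<close>
  increasing along \<open>r\<close>; the labels are \<open>0\<close> outside \<open>S\<close>, so that the set is finite.\<close>
definition linear_extensions :: "'a set \<Rightarrow> ('a \<Rightarrow> 'a \<Rightarrow> bool) \<Rightarrow> ('a \<Rightarrow> nat) set" where
  "linear_extensions S r = {f. bij_betw f S {1..card S} \<and> (\<forall>c. c \<notin> S \<longrightarrow> f c = 0) \<and>
     (\<forall>c\<in>S. \<forall>c'\<in>S. r c c' \<longrightarrow> f c < f c')}"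

definition maximal_elements :: "'a set \<Rightarrow> ('a \<Rightarrow> 'a \<Rightarrow> bool) \<Rightarrow> 'a set" where
  "maximal_elements S r = {c\<in>S. \<not> (\<exists>c'\<in>S. r c c')}"

lemma bij_betw_fun_upd_insert:
  assumes "bij_betw f A B" "a \<notin> A" "b \<notin> B"
  shows "bij_betw (f(a := b)) (insert a A) (insert b B)"
proof -
  have "bij_betw (f(a := b)) A B" using assms(1,2) by (metis bij_betw_cong fun_upd_other)
  thus ?thesis using assms unfolding bij_betw_def inj_on_def by auto
qed

lemma finite_linear_extensions:
  assumes "finite S" shows "finite (linear_extensions S r)"
proof -
  have "linear_extensions S r \<subseteq> {f. \<forall>x. (x \<in> S \<longrightarrow> f x \<in> {1..card S}) \<and> (x \<notin> S \<longrightarrow> f x = 0)}"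
    unfolding linear_extensions_def bij_betw_def by auto
  moreover have "finite {f. \<forall>x. (x \<in> S \<longrightarrow> f x \<in> {1..card S}) \<and> (x \<notin> S \<longrightarrow> f x = (0::nat))}"
    by (rule finite_set_of_finite_funs) (use assms in auto)
  ultimately show ?thesis by (rule finite_subset)
qed

lemma card_linear_extensions_empty [simp]: "card (linear_extensions {} r) = 1"
proof -
  have "linear_extensions {} r = {\<lambda>_. 0}"
    unfolding linear_extensions_def by (auto simp: bij_betw_def)
  thus ?thesis by simp
qed

lemma linear_extensions_remove_top:
  assumes f: "f \<in> linear_extensions S r" and S: "finite S" "c \<in> S" and fc: "f c = card S"
  shows "c \<in> maximal_elements S r" "f(c := 0) \<in> linear_extensions (S - {c}) r"
proof -
  have b: "bij_betw f S {1..card S}" and z: "\<forall>c. c \<notin> S \<longrightarrow> f c = 0"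
    and o: "\<forall>c\<in>S. \<forall>c'\<in>S. r c c' \<longrightarrow> f c < f c'" using f by (auto simp: linear_extensions_def)
  have "\<forall>c'\<in>S. f c' \<le> card S" using b by (auto simp: bij_betw_def)
  hence "\<not> (\<exists>c'\<in>S. r c c')" using o fc S by fastforce
  thus "c \<in> maximal_elements S r" using S by (simp add: maximal_elements_def)
  have "bij_betw f (S - {c}) ({1..card S} - {card S})"
    using b S fc unfolding bij_betw_def inj_on_def by auto
  moreover have "{1..card S} - {card S} = {1..card (S - {c})}" using S by auto
  ultimately have "bij_betw (f(c := 0)) (S - {c}) {1..card (S - {c})}"
    using bij_betw_cong[of "S - {c}" "f(c:=0)" f] by simp
  thus "f(c := 0) \<in> linear_extensions (S - {c}) r" using z o by (auto simp: linear_extensions_def)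
qed

lemma linear_extensions_add_top:
  assumes S: "finite S" and c: "c \<in> maximal_elements S r" and g: "g \<in> linear_extensions (S - {c}) r"
  shows "g(c := card S) \<in> linear_extensions S r"
proof -
  have cS: "c \<in> S" and cm: "\<forall>c'\<in>S. \<not> r c c'" using c by (auto simp: maximal_elements_def)
  have bg: "bij_betw g (S - {c}) {1..card (S - {c})}" and zg: "\<forall>x. x \<notin> S - {c} \<longrightarrow> g x = 0"
    and og: "\<forall>x\<in>S-{c}. \<forall>x'\<in>S-{c}. r x x' \<longrightarrow> g x < g x'"
    using g by (auto simp: linear_extensions_def)
  have N: "card (S - {c}) = card S - 1" "0 < card S" using cS S by (auto simp: card_gt_0_iff)
  have "bij_betw (g(c := card S)) (insert c (S - {c})) (insert (card S) {1..card S - 1})"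
    using bij_betw_fun_upd_insert[OF bg, of c "card S"] N by simp
  moreover have "insert c (S - {c}) = S" "insert (card S) {1..card S - 1} = {1..card S}"
    using cS N by auto
  ultimately have "bij_betw (g(c := card S)) S {1..card S}" by simp
  moreover have "(g(c := card S)) x < (g(c := card S)) x'" if "x \<in> S" "x' \<in> S" "r x x'" for x x'
  proof -
    have "x \<noteq> c" using cm that by auto
    moreover have "g x \<le> card (S - {c})" if "x \<in> S - {c}"
      using bg that by (auto simp: bij_betw_def)
    ultimately show ?thesis using og that N by (cases "x' = c") auto
  qed
  ultimately show ?thesis using zg cS by (auto simp: linear_extensions_def)
qed

text \<open>The largest label sits on a maximal element.\<close>
lemma card_linear_extensions_rec:
  assumes fin: "finite S" and ne: "S \<noteq> {}"
  shows "card (linear_extensions S r) = (\<Sum>c\<in>maximal_elements S r. card (linear_extensions (S - {c}) r))"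
proof -
  let ?N = "card S"
  let ?top = "\<lambda>f. inv_into S f ?N"
  have top: "?top f \<in> S" "f (?top f) = ?N" if "f \<in> linear_extensions S r" for f
  proof -
    have "0 < ?N" using fin ne by (simp add: card_gt_0_iff)
    hence "bij_betw f S {1..?N}" "?N \<in> {1..?N}"
      using that by (auto simp: linear_extensions_def)
    thus "?top f \<in> S" "f (?top f) = ?N" by (metis bij_betw_def inv_into_into, meson bij_betw_inv_into_right)
  qed
  have "bij_betw (\<lambda>f. (?top f, f(?top f := 0))) (linear_extensions S r)
      (SIGMA c:maximal_elements S r. linear_extensions (S - {c}) r)"
  proof (rule bij_betw_byWitness[where f' = "\<lambda>(c, g). g(c := ?N)"])
    show "\<forall>f\<in>linear_extensions S r. (\<lambda>(c, g). g(c := ?N)) (?top f, f(?top f := 0)) = f"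
      using top by (auto simp: fun_upd_idem)
    have top_of_add: "?top (g(c := ?N)) = c" "g c = 0"
      if cmax: "c \<in> maximal_elements S r" and gext: "g \<in> linear_extensions (S - {c}) r" for c g
    proof -
      have "g(c := ?N) \<in> linear_extensions S r" by (rule linear_extensions_add_top[OF fin cmax gext])
      hence "inj_on (g(c := ?N)) S" by (simp add: linear_extensions_def bij_betw_def)
      moreover have "c \<in> S" using cmax by (simp add: maximal_elements_def)
      ultimately show "?top (g(c := ?N)) = c" using inv_into_f_f[of "g(c := ?N)" S c] by simp
      show "g c = 0" using gext by (simp add: linear_extensions_def)
    qed
    show "\<forall>a\<in>(SIGMA c:maximal_elements S r. linear_extensions (S - {c}) r).
        (\<lambda>f. (?top f, f(?top f := 0))) ((\<lambda>(c, g). g(c := ?N)) a) = a"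
      using top_of_add by auto
    show "(\<lambda>f. (?top f, f(?top f := 0))) ` linear_extensions S r
        \<subseteq> (SIGMA c:maximal_elements S r. linear_extensions (S - {c}) r)"
      using linear_extensions_remove_top[OF _ fin] top by blast
    show "(\<lambda>(c, g). g(c := ?N)) ` (SIGMA c:maximal_elements S r. linear_extensions (S - {c}) r)
        \<subseteq> linear_extensions S r"
      using linear_extensions_add_top[OF fin] by auto
  qed
  hence "card (linear_extensions S r) = card (SIGMA c:maximal_elements S r. linear_extensions (S - {c}) r)"
    by (rule bij_betw_same_card)
  also have "\<dots> = (\<Sum>c\<in>maximal_elements S r. card (linear_extensions (S - {c}) r))"
    by (rule card_SigmaI) (auto simp: maximal_elements_def fin finite_linear_extensions)
  finally show ?thesis .
qed

lemma maximal_elements_Un: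
  assumes "\<forall>a\<in>A. \<forall>b\<in>B. \<not> r a b \<and> \<not> r b a"
  shows "maximal_elements (A \<union> B) r = maximal_elements A r \<union> maximal_elements B r"
  using assms unfolding maximal_elements_def by blast

lemma sum_maximal_elements_Un:
  assumes "finite A" "finite B" "A \<inter> B = {}" "\<forall>a\<in>A. \<forall>b\<in>B. \<not> r a b \<and> \<not> r b a"
  shows "(\<Sum>c\<in>maximal_elements (A \<union> B) r. f c) =
    (\<Sum>c\<in>maximal_elements A r. f c) + (\<Sum>c\<in>maximal_elements B r. f c)"
proof -
  have "finite (maximal_elements X r)" if "finite X" for X
    using that by (simp add: maximal_elements_def)
  moreover have "maximal_elements A r \<inter> maximal_elements B r = {}"
    using assms(3) by (auto simp: maximal_elements_def)
  ultimately show ?thesis using assms by (simp add: maximal_elements_Un sum.union_disjoint)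
qed

lemma card_linear_extensions_Un:
  assumes "finite A" "finite B" "A \<inter> B = {}" "\<forall>a\<in>A. \<forall>b\<in>B. \<not> r a b \<and> \<not> r b a"
  shows "card (linear_extensions (A \<union> B) r) =
    (card A + card B choose card A) * card (linear_extensions A r) * card (linear_extensions B r)"
  using assms
proof (induction "card A + card B" arbitrary: A B rule: less_induct)
  case less
  let ?e = "\<lambda>X. card (linear_extensions X r)"
  show ?case
  proof (cases "A = {} \<or> B = {}")
    case True thus ?thesis by auto
  next
    case False
    have remove_max: "(\<Sum>c\<in>maximal_elements X r. ?e (X \<union> Y - {c})) =
        (card X - 1 + card Y choose (card X - 1)) * ?e X * ?e Y"
      if XY: "(X, Y) = (A, B) \<or> (X, Y) = (B, A)" for X Y
    proof -
      have X: "finite X" "X \<noteq> {}" "finite Y" and XY_disj: "X \<inter> Y = {}"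
        and XY_inc: "\<forall>a\<in>X. \<forall>b\<in>Y. \<not> r a b \<and> \<not> r b a"
        using XY False less.prems by auto
      have "?e (X \<union> Y - {c}) = (card X - 1 + card Y choose (card X - 1)) * ?e (X - {c}) * ?e Y"
        if c: "c \<in> maximal_elements X r" for c
      proof -
        have cX: "c \<in> X" using c by (simp add: maximal_elements_def)
        have XY_c: "X \<union> Y - {c} = (X - {c}) \<union> Y" using cX XY_disj by auto
        have card_c: "card (X - {c}) = card X - 1" "card (X - {c}) + card Y < card A + card B"
          using cX X XY card_gt_0_iff[of X] by auto
        have "?e ((X - {c}) \<union> Y) = (card (X - {c}) + card Y choose card (X - {c})) * ?e (X - {c}) * ?e Y"
          by (rule less.hyps) (use card_c X XY_disj XY_inc in auto)
        thus ?thesis using XY_c card_c by simp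
      qed
      hence "(\<Sum>c\<in>maximal_elements X r. ?e (X \<union> Y - {c})) =
          (card X - 1 + card Y choose (card X - 1)) * ?e Y * (\<Sum>c\<in>maximal_elements X r. ?e (X - {c}))"
        by (simp add: sum_distrib_left sum_distrib_right mult_ac)
      thus ?thesis using card_linear_extensions_rec[OF X(1,2)] by (simp add: mult_ac)
    qed
    obtain a b where ab: "card A = Suc a" "card B = Suc b"
      using False less.prems by (metis card_0_eq not0_implies_Suc)
    have "?e (A \<union> B) = (\<Sum>c\<in>maximal_elements A r. ?e (A \<union> B - {c})) +
        (\<Sum>c\<in>maximal_elements B r. ?e (B \<union> A - {c}))"
      using card_linear_extensions_rec[of "A \<union> B" r] sum_maximal_elements_Un[OF less.prems] False
        less.prems(1,2) by (simp add: Un_commute)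
    also have "\<dots> = ((a + Suc b choose a) + (b + Suc a choose b)) * ?e A * ?e B"
      using remove_max[of A B] remove_max[of B A] ab by (simp add: algebra_simps)
    also have "(a + Suc b choose a) + (b + Suc a choose b) = card A + card B choose card A"
      using ab binomial_symmetric[of b "b + Suc a"] by (simp add: add.commute add.left_commute)
    finally show ?thesis .
  qed
qed

lemma card_linear_extensions_UN_mult:
  assumes "finite I" "\<forall>i\<in>I. finite (S i)"
    "\<forall>i\<in>I. \<forall>j\<in>I. i \<noteq> j \<longrightarrow> S i \<inter> S j = {}"
    "\<forall>i\<in>I. \<forall>j\<in>I. i \<noteq> j \<longrightarrow> (\<forall>a\<in>S i. \<forall>b\<in>S j. \<not> r a b)"
  shows "card (linear_extensions (\<Union>i\<in>I. S i) r) * (\<Prod>i\<in>I. fact (card (S i))) =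
         fact (\<Sum>i\<in>I. card (S i)) * (\<Prod>i\<in>I. card (linear_extensions (S i) r))"
  using assms
proof (induction I rule: finite_induct)
  case empty thus ?case by simp
next
  case (insert j I)
  let ?R = "\<Union>i\<in>I. S i"
  let ?s = "card (S j)" and ?t = "\<Sum>i\<in>I. card (S i)"
  have "card ?R = ?t"
    by (rule card_UN_disjoint) (use insert in auto)
  moreover have "S j \<inter> ?R = {}" using insert(2,5) by fastforce
  moreover have "\<forall>a\<in>S j. \<forall>b\<in>?R. \<not> r a b \<and> \<not> r b a" using insert(2,6) by fastforce
  ultimately have "card (linear_extensions (\<Union>i\<in>insert j I. S i) r) =
      (?s + ?t choose ?s) * card (linear_extensions (S j) r) * card (linear_extensions ?R r)"
    using card_linear_extensions_Un[of "S j" ?R r] insert by simp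
  hence "card (linear_extensions (\<Union>i\<in>insert j I. S i) r) * (\<Prod>i\<in>insert j I. fact (card (S i))) =
     (?s + ?t choose ?s) * fact ?s * card (linear_extensions (S j) r) *
       (card (linear_extensions ?R r) * (\<Prod>i\<in>I. fact (card (S i))))"
    using insert by (simp add: mult_ac)
  also have "\<dots> = (?s + ?t choose ?s) * fact ?s * fact ?t *
      card (linear_extensions (S j) r) * (\<Prod>i\<in>I. card (linear_extensions (S i) r))"
    using insert by (simp add: mult_ac)
  also have "(?s + ?t choose ?s) * fact ?s * fact ?t = fact (?s + ?t)"
    using binomial_fact_lemma[of ?s "?s + ?t"] by (simp add: mult_ac)
  finally show ?case using insert by (simp add: mult_ac)
qed

lemma prod_fact_dvd_fact_sum: "finite I \<Longrightarrow> (\<Prod>i\<in>I. fact (a i)) dvd (fact (\<Sum>i\<in>I. a i) :: nat)"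
proof (induction I rule: finite_induct)
  case empty thus ?case by simp
next
  case (insert j I)
  have "fact (a j) * (\<Prod>i\<in>I. fact (a i)) dvd fact (a j) * (fact (\<Sum>i\<in>I. a i) :: nat)"
    using insert(3) by (rule mult_dvd_mono[OF dvd_refl])
  also have "\<dots> dvd fact (a j + (\<Sum>i\<in>I. a i))" by (rule fact_fact_dvd_fact)
  finally show ?case using insert by simp
qed

lemma card_linear_extensions_UN:
  assumes "finite I" "\<forall>i\<in>I. finite (S i)"
    "\<forall>i\<in>I. \<forall>j\<in>I. i \<noteq> j \<longrightarrow> S i \<inter> S j = {}"
    "\<forall>i\<in>I. \<forall>j\<in>I. i \<noteq> j \<longrightarrow> (\<forall>a\<in>S i. \<forall>b\<in>S j. \<not> r a b)"
  shows "card (linear_extensions (\<Union>i\<in>I. S i) r) =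
    multinomial (\<Sum>i\<in>I. card (S i)) (\<lambda>i. card (S i)) I * (\<Prod>i\<in>I. card (linear_extensions (S i) r))"
proof -
  let ?P = "\<Prod>i\<in>I. fact (card (S i)) :: nat" and ?F = "fact (\<Sum>i\<in>I. card (S i)) :: nat"
  let ?Y = "\<Prod>i\<in>I. card (linear_extensions (S i) r)"
  have "0 < ?P" by (rule prod_pos) simp
  hence "card (linear_extensions (\<Union>i\<in>I. S i) r) =
      card (linear_extensions (\<Union>i\<in>I. S i) r) * ?P div ?P" by simp
  also have "\<dots> = ?F * ?Y div ?P" by (simp only: card_linear_extensions_UN_mult[OF assms])
  also have "\<dots> = ?F div ?P * ?Y"
    using prod_fact_dvd_fact_sum[OF assms(1)] by (rule dvd_div_mult[symmetric])
  finally show ?thesis by (simp add: multinomial_def)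
qed

lemma linear_extensions_transfer:
  assumes g: "bij_betw g S S'" and rel: "\<forall>c\<in>S. \<forall>c'\<in>S. r c c' \<longleftrightarrow> r' (g c) (g c')"
    and f: "f \<in> linear_extensions S' r'"
  shows "(\<lambda>c. if c \<in> S then f (g c) else 0) \<in> linear_extensions S r"
proof -
  let ?h = "\<lambda>c. if c \<in> S then f (g c) else 0"
  have f_bij: "bij_betw f S' {1..card S'}" and f_mono: "\<forall>d\<in>S'. \<forall>d'\<in>S'. r' d d' \<longrightarrow> f d < f d'"
    using f by (auto simp: linear_extensions_def)
  have gS: "g c \<in> S'" if "c \<in> S" for c using g that by (meson bij_betwE)
  have "bij_betw (f \<circ> g) S {1..card S'}" by (rule bij_betw_trans[OF g f_bij])
  moreover have "bij_betw ?h S {1..card S'} = bij_betw (f \<circ> g) S {1..card S'}"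
    by (rule bij_betw_cong) simp
  moreover have "card S' = card S" using g by (simp add: bij_betw_same_card)
  ultimately have "bij_betw ?h S {1..card S}" by simp
  moreover have "?h c < ?h c'" if "c \<in> S" "c' \<in> S" "r c c'" for c c'
    using that rel f_mono gS by simp
  ultimately show ?thesis by (simp add: linear_extensions_def)
qed

lemma card_linear_extensions_le_iso:
  assumes g: "bij_betw g S S'" and rel: "\<forall>c\<in>S. \<forall>c'\<in>S. r c c' \<longleftrightarrow> r' (g c) (g c')"
    and fin: "finite S"
  shows "card (linear_extensions S' r') \<le> card (linear_extensions S r)"
proof (rule card_inj_on_le)
  let ?pull = "\<lambda>f c. if c \<in> S then f (g c) else 0"
  show "?pull ` linear_extensions S' r' \<subseteq> linear_extensions S r"
    using linear_extensions_transfer[OF g rel] by blast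
  show "finite (linear_extensions S r)" using fin by (rule finite_linear_extensions)
  show "inj_on ?pull (linear_extensions S' r')"
  proof (rule inj_onI)
    fix f f' assume f: "f \<in> linear_extensions S' r'" "f' \<in> linear_extensions S' r'"
      and eq: "?pull f = ?pull f'"
    show "f = f'"
    proof
      fix d show "f d = f' d"
      proof (cases "d \<in> S'")
        case True
        then obtain c where "c \<in> S" "d = g c" using g by (auto simp: bij_betw_def)
        thus ?thesis using fun_cong[OF eq, of c] by simp
      next
        case False thus ?thesis using f by (simp add: linear_extensions_def)
      qed
    qed
  qed
qed

lemma card_linear_extensions_iso:
  assumes g: "bij_betw g S S'" and rel: "\<forall>c\<in>S. \<forall>c'\<in>S. r c c' \<longleftrightarrow> r' (g c) (g c')"
    and fin: "finite S"
  shows "card (linear_extensions S r) = card (linear_extensions S' r')"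
proof -
  have "bij_betw (inv_into S g) S' S" using g by (rule bij_betw_inv_into)
  moreover have "\<forall>d\<in>S'. \<forall>d'\<in>S'. r' d d' \<longleftrightarrow> r (inv_into S g d) (inv_into S g d')"
    using rel g by (auto simp: bij_betw_def f_inv_into_f inv_into_into)
  moreover have "finite S'" using g fin by (simp add: bij_betw_finite)
  ultimately show ?thesis
    using card_linear_extensions_le_iso[OF g rel fin]
      card_linear_extensions_le_iso[of "inv_into S g" S' S r' r] by simp
qed

lemma linear_extensions_subset_trancl:
  assumes "\<And>c c'. c \<in> S \<Longrightarrow> c' \<in> S \<Longrightarrow> r' c c' \<Longrightarrow> (\<lambda>x y. x \<in> S \<and> y \<in> S \<and> r x y)\<^sup>+\<^sup>+ c c'"
  shows "linear_extensions S r \<subseteq> linear_extensions S r'"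
proof
  fix f assume f: "f \<in> linear_extensions S r"
  have "f c < f c'" if "(\<lambda>x y. x \<in> S \<and> y \<in> S \<and> r x y)\<^sup>+\<^sup>+ c c'" for c c'
    using that by (induction rule: tranclp_induct) (use f in \<open>fastforce simp: linear_extensions_def\<close>)+
  thus "f \<in> linear_extensions S r'" using f assms by (auto simp: linear_extensions_def)
qed

section \<open>Heights of paths\<close>

fun step_delta :: "step \<Rightarrow> int" where
  "step_delta U = 1"
| "step_delta D = -1"

lemma cnt_Nil [simp]: "cnt s [] = 0" by (simp add: cnt_def)
lemma cnt_Cons [simp]: "cnt s (x # w) = (if x = s then 1 else 0) + cnt s w" by (simp add: cnt_def)
lemma cnt_append [simp]: "cnt s (v @ w) = cnt s v + cnt s w" by (simp add: cnt_def)

lemma cnt_le_length: "cnt s w \<le> length w" by (simp add: cnt_def)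

lemma cnt_take_le: "cnt s (take k w) \<le> cnt s w"
  using cnt_append[of s "take k w" "drop k w"] by simp

lemma cnt_U_plus_cnt_D: "cnt U w + cnt D w = length w"
  by (induction w) (auto split: step.splits, metis step.exhaust)+

lemma ht_0 [simp]: "ht w 0 = 0" by (simp add: ht_def)

lemma ht_Suc: "k < length w \<Longrightarrow> ht w (Suc k) = ht w k + step_delta (w ! k)"
  by (cases "w ! k") (auto simp: ht_def take_Suc_conv_app_nth)

lemma ht_beyond: "length w \<le> k \<Longrightarrow> ht w k = ht w (length w)"
  by (simp add: ht_def)

lemma ht_eq_cnt_D: "k \<le> length w \<Longrightarrow> ht w k = int k - 2 * int (cnt D (take k w))"
  using cnt_U_plus_cnt_D[of "take k w"] unfolding ht_def by simp

lemma even_ht_plus: "k \<le> length w \<Longrightarrow> even (ht w k + int k)"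
  by (simp add: ht_eq_cnt_D)

lemma ht_bounds: "k \<le> length w \<Longrightarrow> - int k \<le> ht w k \<and> ht w k \<le> int k"
  using ht_eq_cnt_D[of k w] cnt_le_length[of D "take k w"] by simp

lemma ht_Suc_cases: "k < length w \<Longrightarrow> ht w (Suc k) = ht w k + 1 \<or> ht w (Suc k) = ht w k - 1"
  using ht_Suc[of k w] by (cases "w ! k") auto

lemma nth_eq_ht: "k < length w \<Longrightarrow> w ! k = (if ht w (Suc k) > ht w k then U else D)"
  using ht_Suc[of k w] by (cases "w ! k") auto

lemma even_ht_diff:
  "k \<le> length a \<Longrightarrow> k \<le> length b \<Longrightarrow> even (ht b k - ht a k)"
  using even_ht_plus[of k a] even_ht_plus[of k b] by presburger

lemma ht_less_imp_le_minus_2: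
  "k \<le> length a \<Longrightarrow> k \<le> length b \<Longrightarrow> ht a k < ht b k \<Longrightarrow> ht a k \<le> ht b k - 2"
  using even_ht_diff[of k a b] by presburger

lemma path_eqI:
  assumes "length a = length b" "\<forall>k\<le>length a. ht a k = ht b k"
  shows "a = b"
proof (rule nth_equalityI)
  fix i assume "i < length a"
  thus "a ! i = b ! i" using assms nth_eq_ht[of i a] nth_eq_ht[of i b] by simp
qed (fact assms(1))

lemma ht_add_factor:
  assumes "p + l \<le> length w" "k \<le> l"
  shows "ht w (p + k) = ht w p + ht (factor w p l) k"
proof -
  have "take (p + k) w = take p w @ take k (drop p w)" by (simp add: take_add)
  moreover have "take k (factor w p l) = take k (drop p w)" using assms(2)
    by (simp add: factor_def min_def)
  ultimately show ?thesis by (simp add: ht_def)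
qed

lemma length_factor: "p + l \<le> length w \<Longrightarrow> length (factor w p l) = l"
  by (simp add: factor_def)

lemma nth_factor: "p + l \<le> length w \<Longrightarrow> i < l \<Longrightarrow> factor w p l ! i = w ! (p + i)"
  by (simp add: factor_def)

lemma dyck_nonneg: assumes "w \<in> dyck n" shows "ht w k \<ge> 0"
  using assms ht_beyond[of w k] by (cases "k \<le> length w") (auto simp: dyck_def)

lemma dyck_end: "w \<in> dyck n \<Longrightarrow> ht w (length w) = 0"
  unfolding dyck_def by blast

lemma dyck_same_length: "g \<in> dyck n \<Longrightarrow> g' \<in> dyck n \<Longrightarrow> length g = length g'"
  by (simp add: dyck_def)

lemma dyck_le_refl: "dyck_le g g"
  by (simp add: dyck_le_def)

lemma finite_dyck: "finite (dyck n)"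
proof -
  have "dyck n \<subseteq> {w. set w \<subseteq> {U, D} \<and> length w = 2 * n}" by (auto simp: dyck_def intro: step.exhaust)
  moreover have "finite {w. set w \<subseteq> {U, D} \<and> length w = 2 * n}"
    by (rule finite_lists_length_eq) simp
  ultimately show ?thesis by (rule finite_subset)
qed

section \<open>Cover relation of the Dyck lattice\<close>

definition peak :: "step list \<Rightarrow> nat \<Rightarrow> bool" where
  "peak w m \<longleftrightarrow> 0 < m \<and> m < length w \<and> w ! (m - 1) = U \<and> w ! m = D"

definition flip_peak :: "step list \<Rightarrow> nat \<Rightarrow> step list" where
  "flip_peak w m = w[m - 1 := D, m := U]"

lemma length_flip_peak [simp]: "length (flip_peak w m) = length w"
  by (simp add: flip_peak_def)

lemma ht_flip_peak:
  assumes "peak w m" "k \<le> length w"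
  shows "ht (flip_peak w m) k = ht w k - (if k = m then 2 else 0)"
  using assms(2)
proof (induction k)
  case (Suc k)
  have k: "k < length w" using Suc by simp
  have "flip_peak w m ! k = (if k = m then U else if k = m - 1 then D else w ! k)"
    using assms(1) k by (auto simp: flip_peak_def peak_def nth_list_update)
  thus ?case using ht_Suc[of k "flip_peak w m"] ht_Suc[of k w] k Suc assms(1)
    by (auto simp: peak_def)
qed (use assms(1) in \<open>simp add: peak_def\<close>)

lemma peak_ht:
  assumes "peak w m"
  shows "ht w (m - 1) = ht w m - 1" "ht w (Suc m) = ht w m - 1"
  using assms ht_Suc[of "m - 1" w] ht_Suc[of m w] by (auto simp: peak_def)

lemma peakI:
  assumes "0 < m" "m < length w" "ht w (m - 1) = ht w m - 1" "ht w (Suc m) = ht w m - 1"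
  shows "peak w m"
  using assms nth_eq_ht[of "m - 1" w] nth_eq_ht[of m w] by (simp add: peak_def)

lemma flip_peak_dyck:
  assumes "w \<in> dyck n" "peak w m" "ht w m \<ge> 2"
  shows "flip_peak w m \<in> dyck n"
  using assms ht_flip_peak[OF assms(2)] unfolding dyck_def by (auto simp: peak_def)

lemma flip_peak_le: "peak w m \<Longrightarrow> dyck_le (flip_peak w m) w"
  by (simp add: dyck_le_def ht_flip_peak)

lemma flip_peak_neq: assumes "peak w m" shows "flip_peak w m \<noteq> w"
  using ht_flip_peak[OF assms, of m] assms by (auto simp: peak_def)

lemma le_flip_peak_iff:
  assumes g: "length g = length g'" and pk: "peak g' m"
  shows "dyck_le g (flip_peak g' m) \<longleftrightarrow> dyck_le g g' \<and> ht g m < ht g' m"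
proof
  assume le: "dyck_le g (flip_peak g' m)"
  have bound: "ht g k \<le> ht g' k - (if k = m then 2 else 0)" if "k \<le> length g" for k
    using le[unfolded dyck_le_def, rule_format, of k] that ht_flip_peak[OF pk, of k] g by simp
  have "ht g k \<le> ht g' k" if "k \<le> length g" for k
    using bound[OF that] by (simp split: if_splits)
  moreover have "m \<le> length g" using pk g by (simp add: peak_def)
  ultimately show "dyck_le g g' \<and> ht g m < ht g' m"
    using bound[of m] by (simp add: dyck_le_def)
next
  assume a: "dyck_le g g' \<and> ht g m < ht g' m"
  hence "ht g m \<le> ht g' m - 2"
    using ht_less_imp_le_minus_2[of m g g'] pk g by (simp add: peak_def)
  thus "dyck_le g (flip_peak g' m)" using a ht_flip_peak[OF pk] g unfolding dyck_le_def by auto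
qed

lemma between_flip_peak:
  assumes c: "c \<in> dyck n" and w: "w \<in> dyck n" and pk: "peak w m"
    and le: "dyck_le (flip_peak w m) c" "dyck_le c w"
  shows "c = flip_peak w m \<or> c = w"
proof -
  have lc: "length c = length w" using c w by (rule dyck_same_length)
  have m: "m < length w" using pk by (simp add: peak_def)
  have off_m: "ht c k = ht w k" if "k \<le> length w" "k \<noteq> m" for k
    using le that lc ht_flip_peak[OF pk, of k] unfolding dyck_le_def by force
  have "ht w m - 2 \<le> ht c m"
    using le(1)[unfolded dyck_le_def, rule_format, of m] m ht_flip_peak[OF pk, of m] by simp
  moreover have "ht c m \<le> ht w m" using le(2) m lc unfolding dyck_le_def by simp
  moreover have "even (ht w m - ht c m)" using even_ht_diff[of m c w] m lc by simp
  ultimately have "ht c m = ht w m - 2 \<or> ht c m = ht w m" by presburger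
  thus ?thesis
  proof
    assume "ht c m = ht w m - 2"
    hence "\<forall>k\<le>length c. ht c k = ht (flip_peak w m) k" using lc off_m ht_flip_peak[OF pk] by auto
    thus ?thesis using path_eqI[of c "flip_peak w m"] lc by simp
  next
    assume "ht c m = ht w m"
    hence "\<forall>k\<le>length c. ht c k = ht w k" using lc off_m by auto
    thus ?thesis using path_eqI[of c w] lc by simp
  qed
qed

lemma dyck_covers_flip_peak:
  assumes "w \<in> dyck n" "peak w m" "ht w m \<ge> 2"
  shows "dyck_covers n (flip_peak w m) w"
  using flip_peak_dyck[OF assms] flip_peak_le[OF assms(2)] flip_peak_neq[OF assms(2)]
    between_flip_peak[OF _ assms(1,2)] assms(1)
  unfolding dyck_covers_def by blast

text \<open>Where a lower path is strictly below, a highest such point of the upper path is a peak.\<close>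
lemma exists_peak_above:
  assumes d: "d \<in> dyck n" and w: "w \<in> dyck n" and le: "dyck_le d w" and ne: "d \<noteq> w"
  shows "\<exists>m. peak w m \<and> ht d m < ht w m"
proof -
  have ld: "length d = length w" using d w by (rule dyck_same_length)
  let ?K = "{k. k \<le> length w \<and> ht d k < ht w k}"
  have "?K \<noteq> {}"
  proof
    assume "?K = {}"
    hence "\<forall>k\<le>length d. ht d k = ht w k" using le ld by (force simp: dyck_le_def)
    thus False using path_eqI[OF ld] ne by simp
  qed
  hence "Max (ht w ` ?K) \<in> ht w ` ?K" by (intro Max_in) auto
  then obtain m where mK: "m \<in> ?K" and "ht w m = Max (ht w ` ?K)" by auto
  hence mmax: "\<forall>k\<in>?K. ht w k \<le> ht w m" by simp
  have m0: "m \<noteq> 0" using mK by (cases m) auto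
  have mlt: "m < length w" using mK dyck_end[OF d] dyck_end[OF w] ld by (cases "m = length w") auto
  have "ht w (Suc m) = ht w m - 1"
  proof (rule ccontr)
    assume "ht w (Suc m) \<noteq> ht w m - 1"
    hence up: "ht w (Suc m) = ht w m + 1" using ht_Suc_cases[OF mlt] by auto
    moreover have "ht d (Suc m) \<le> ht d m + 1" using ht_Suc_cases[of m d] mlt ld by auto
    ultimately have "Suc m \<in> ?K" using mK mlt by simp
    thus False using mmax up by force
  qed
  moreover have "ht w (m - 1) = ht w m - 1"
  proof (rule ccontr)
    assume "ht w (m - 1) \<noteq> ht w m - 1"
    moreover have sm: "Suc (m - 1) = m" using m0 by simp
    ultimately have up: "ht w (m - 1) = ht w m + 1" using ht_Suc_cases[of "m - 1" w] mlt by auto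
    moreover have "ht d (m - 1) \<le> ht d m + 1" using ht_Suc_cases[of "m - 1" d] mlt sm ld by auto
    ultimately have "m - 1 \<in> ?K" using mK by auto
    thus False using mmax up by force
  qed
  ultimately show ?thesis using peakI[of m w] m0 mlt mK by auto
qed

lemma dyck_covers_imp_flip_peak:
  assumes "dyck_covers n d w"
  shows "\<exists>m. peak w m \<and> ht w m \<ge> 2 \<and> d = flip_peak w m"
proof -
  have d: "d \<in> dyck n" and w: "w \<in> dyck n" and le: "dyck_le d w" and ne: "d \<noteq> w"
    and nb: "\<not> (\<exists>c \<in> dyck n. dyck_le d c \<and> dyck_le c w \<and> c \<noteq> d \<and> c \<noteq> w)"
    using assms by (auto simp: dyck_covers_def)
  obtain m where pk: "peak w m" and lt: "ht d m < ht w m" using exists_peak_above[OF d w le ne] by blast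
  have ld: "length d = length w" using d w by (rule dyck_same_length)
  have "ht d m \<le> ht w m - 2"
    using ht_less_imp_le_minus_2[OF _ _ lt] pk ld by (simp add: peak_def)
  hence h2: "ht w m \<ge> 2" using dyck_nonneg[OF d, of m] by simp
  have "dyck_le d (flip_peak w m)" using le_flip_peak_iff[OF ld pk] le lt by simp
  hence "flip_peak w m = d"
    using nb flip_peak_dyck[OF w pk h2] flip_peak_le[OF pk] flip_peak_neq[OF pk] by blast
  thus ?thesis using pk h2 by blast
qed

lemma covers_eq_flip_peaks:
  assumes "w \<in> dyck n"
  shows "{d\<in>dyck n. dyck_covers n d w} = flip_peak w ` {m. peak w m \<and> 2 \<le> ht w m}"
  using dyck_covers_imp_flip_peak dyck_covers_flip_peak[OF assms] flip_peak_dyck[OF assms]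
  by blast

lemma inj_on_flip_peak: "inj_on (flip_peak w) {m. peak w m}"
proof (rule inj_onI)
  fix m m' assume pk: "m \<in> {m. peak w m}" "m' \<in> {m. peak w m}"
    and eq: "flip_peak w m = flip_peak w m'"
  have "m \<le> length w" using pk by (simp add: peak_def)
  thus "m = m'" using ht_flip_peak[of w m m] ht_flip_peak[of w m' m] pk eq
    by (cases "m = m'") auto
qed

section \<open>Saturated chains as linear extensions\<close>

definition chains_between :: "nat \<Rightarrow> nat \<Rightarrow> step list \<Rightarrow> step list \<Rightarrow> step list list set" where
  "chains_between n h g g' = {cs \<in> sat_chains n h. hd cs = g \<and> last cs = g'}"

lemma finite_sat_chains: "finite (sat_chains n h)"
proof -
  have "sat_chains n h \<subseteq> {cs. set cs \<subseteq> dyck n \<and> length cs = h + 1}" by (auto simp: sat_chains_def)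
  moreover have "finite {cs. set cs \<subseteq> dyck n \<and> length cs = h + 1}"
    by (rule finite_lists_length_eq) (rule finite_dyck)
  ultimately show ?thesis by (rule finite_subset)
qed

lemma finite_chains_between: "finite (chains_between n h g g')"
  using finite_sat_chains by (simp add: chains_between_def)

lemma sc_eq_sum_chains_between: "sc h n = (\<Sum>g\<in>dyck n. \<Sum>g'\<in>dyck n. card (chains_between n h g g'))"
proof -
  have "sat_chains n h = (\<Union>g\<in>dyck n. \<Union>g'\<in>dyck n. chains_between n h g g')"
  proof (intro set_eqI iffI)
    fix cs assume cs: "cs \<in> sat_chains n h"
    hence "cs \<noteq> []" "set cs \<subseteq> dyck n" by (auto simp: sat_chains_def)
    hence "hd cs \<in> dyck n" "last cs \<in> dyck n" by auto
    thus "cs \<in> (\<Union>g\<in>dyck n. \<Union>g'\<in>dyck n. chains_between n h g g')" using cs by (auto simp: chains_between_def)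
  qed (auto simp: chains_between_def)
  hence "sc h n = card (\<Union>g\<in>dyck n. \<Union>g'\<in>dyck n. chains_between n h g g')" by (simp add: sc_def)
  also have "\<dots> = (\<Sum>g\<in>dyck n. card (\<Union>g'\<in>dyck n. chains_between n h g g'))"
    by (rule card_UN_disjoint) (auto simp: finite_dyck finite_sat_chains chains_between_def)
  also have "\<dots> = (\<Sum>g\<in>dyck n. \<Sum>g'\<in>dyck n. card (chains_between n h g g'))"
    by (rule sum.cong[OF refl], rule card_UN_disjoint)
      (auto simp: finite_dyck finite_sat_chains chains_between_def)
  finally show ?thesis .
qed

lemma chains_between_0: "chains_between n 0 g g' = (if g = g' \<and> g \<in> dyck n then {[g]} else {})"
proof -
  have "cs \<in> chains_between n 0 g g' \<longleftrightarrow> g = g' \<and> g \<in> dyck n \<and> cs = [g]" for cs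
    by (cases cs) (auto simp: chains_between_def sat_chains_def)
  thus ?thesis by auto
qed

lemma snoc_in_sat_chains:
  assumes "length cs = Suc h"
  shows "cs @ [x] \<in> sat_chains n (Suc h) \<longleftrightarrow>
    cs \<in> sat_chains n h \<and> x \<in> dyck n \<and> dyck_covers n (last cs) x"
proof -
  have "last cs = cs ! h" using assms by (metis diff_Suc_1 last_conv_nth list.size(3) nat.distinct(1))
  moreover have "(\<forall>i<Suc h. P i) \<longleftrightarrow> (\<forall>i<h. P i) \<and> P h" for P by (auto simp: less_Suc_eq)
  ultimately show ?thesis using assms by (auto simp: sat_chains_def nth_append)
qed

lemma chains_between_Suc:
  "chains_between n (Suc h) g g' =
    (\<Union>d\<in>{d. dyck_covers n d g'}. (\<lambda>cs. cs @ [g']) ` chains_between n h g d)"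
proof (intro set_eqI iffI)
  fix cs assume cs: "cs \<in> chains_between n (Suc h) g g'"
  hence len: "length cs = Suc (Suc h)" by (simp add: chains_between_def sat_chains_def)
  then obtain cs' x where cs': "cs = cs' @ [x]" by (metis length_Suc_conv_rev)
  hence "length cs' = Suc h" using len by simp
  moreover from this have "hd cs' = hd cs" using cs' by (cases cs') auto
  ultimately have "cs' \<in> chains_between n h g (last cs')" "dyck_covers n (last cs') g'" "x = g'"
    using cs cs' snoc_in_sat_chains by (auto simp: chains_between_def)
  thus "cs \<in> (\<Union>d\<in>{d. dyck_covers n d g'}. (\<lambda>cs. cs @ [g']) ` chains_between n h g d)"
    using cs' by blast
next
  fix cs assume "cs \<in> (\<Union>d\<in>{d. dyck_covers n d g'}. (\<lambda>cs. cs @ [g']) ` chains_between n h g d)"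
  then obtain d cs' where "cs = cs' @ [g']" "dyck_covers n d g'" "cs' \<in> chains_between n h g d"
    by auto
  moreover from this have "length cs' = Suc h" "cs' \<noteq> []"
    by (auto simp: chains_between_def sat_chains_def)
  ultimately show "cs \<in> chains_between n (Suc h) g g'"
    using snoc_in_sat_chains by (auto simp: chains_between_def dyck_covers_def)
qed

lemma card_chains_between_Suc:
  "card (chains_between n (Suc h) g g') =
    (\<Sum>d\<in>{d\<in>dyck n. dyck_covers n d g'}. card (chains_between n h g d))"
proof -
  have "{d. dyck_covers n d g'} = {d\<in>dyck n. dyck_covers n d g'}" by (auto simp: dyck_covers_def)
  moreover have "inj_on (\<lambda>cs. cs @ [g']) A" for A by (simp add: inj_on_def)
  moreover have
    "(\<lambda>cs. cs @ [g']) ` chains_between n h g d \<inter> (\<lambda>cs. cs @ [g']) ` chains_between n h g d' = {}"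
    if "d \<noteq> d'" for d d'
    using that by (auto simp: chains_between_def)
  ultimately show ?thesis unfolding chains_between_Suc
    by (subst card_UN_disjoint) (auto simp: finite_dyck finite_chains_between card_image)
qed

text \<open>The unit squares between two paths, rotated by \<open>45\<degree>\<close>: the square with bottom vertex
  \<open>(m, v)\<close> is represented by that vertex.\<close>
definition region :: "step list \<Rightarrow> step list \<Rightarrow> (nat \<times> int) set" where
  "region g g' = {(m, v). m \<le> length g \<and> ht g m \<le> v \<and> v < ht g' m \<and> even (v - ht g m)}"

text \<open>\<open>supports c c'\<close>: the square \<open>c'\<close> rests on the square \<open>c\<close>.\<close>
fun supports :: "nat \<times> int \<Rightarrow> nat \<times> int \<Rightarrow> bool" where
  "supports (m, v) (m', v') \<longleftrightarrow> (m' = Suc m \<or> Suc m' = m) \<and> v' = v + 1"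

lemma finite_region: "finite (region g g')"
proof -
  have "region g g' \<subseteq> (SIGMA m:{..length g}. {ht g m..<ht g' m})" by (auto simp: region_def)
  thus ?thesis by (rule finite_subset) auto
qed

lemma region_empty_imp_eq:
  assumes "length g = length g'" "dyck_le g g'" "region g g' = {}"
  shows "g = g'"
proof (rule path_eqI[OF assms(1)], intro allI impI)
  fix k assume k: "k \<le> length g"
  hence "ht g k \<le> ht g' k" using assms(2) by (simp add: dyck_le_def)
  moreover have "(k, ht g k) \<notin> region g g'" using assms(3) by simp
  ultimately show "ht g k = ht g' k" using k by (auto simp: region_def)
qed

lemma region_flip_peak:
  assumes l: "length g = length g'" and pk: "peak g' m"
  shows "region g (flip_peak g' m) = region g g' - {(m, ht g' m - 2)}"
proof (intro set_eqI)
  fix c :: "nat \<times> int"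
  obtain k v where c: "c = (k, v)" by (cases c)
  show "c \<in> region g (flip_peak g' m) \<longleftrightarrow> c \<in> region g g' - {(m, ht g' m - 2)}"
  proof (cases "k \<le> length g \<and> ht g k \<le> v \<and> even (v - ht g k)")
    case True
    hence "even (ht g' k - v)" using even_ht_diff[of k g g'] l by presburger
    hence "v < ht g' k - 2 \<longleftrightarrow> v < ht g' k \<and> v \<noteq> ht g' k - 2" by presburger
    thus ?thesis using True c ht_flip_peak[OF pk, of k] l by (auto simp: region_def)
  qed (auto simp: region_def c)
qed

lemma region_step_up:
  assumes c: "(m, v) \<in> region g g'" and m': "m' = Suc m \<or> Suc m' = m" "m' \<le> length g"
    and above: "v + 1 < ht g' m'"
  shows "(m', v + 1) \<in> region g g'"
proof -
  from m' have "ht g m' = ht g m + 1 \<or> ht g m' = ht g m - 1"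
  proof (elim disjE conjE)
    assume "m' = Suc m" thus ?thesis using m'(2) ht_Suc_cases[of m g] by simp
  next
    assume "Suc m' = m" thus ?thesis using c ht_Suc_cases[of m' g] by (auto simp: region_def)
  qed
  thus ?thesis using c m' above by (auto simp: region_def)
qed

lemma maximal_region_imp_peak:
  assumes g: "g \<in> dyck n" and g': "g' \<in> dyck n"
    and max: "(m, v) \<in> maximal_elements (region g g') supports"
  shows "peak g' m \<and> ht g m < ht g' m \<and> v = ht g' m - 2"
proof -
  have l: "length g = length g'" by (rule dyck_same_length[OF g g'])
  have inr: "(m, v) \<in> region g g'" and nomax: "\<forall>c'\<in>region g g'. \<not> supports (m, v) c'"
    using max by (auto simp: maximal_elements_def)
  have mle: "m \<le> length g" and a: "ht g m \<le> v" "v < ht g' m" "even (v - ht g m)"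
    using inr by (auto simp: region_def)
  have "even (ht g' m - v)" using even_ht_diff[of m g g'] mle l a(3) by presburger
  hence v: "v \<le> ht g' m - 2" using a(2) by presburger
  have m0: "m \<noteq> 0" using a by (cases m) auto
  have mlt: "m < length g" using a dyck_end[OF g] dyck_end[OF g'] l mle by (cases "m = length g") auto
  have "ht g' m' \<le> v + 1" if "m' = Suc m \<or> Suc m' = m" for m'
  proof (rule ccontr)
    assume "\<not> ht g' m' \<le> v + 1"
    moreover have "m' \<le> length g" using that mlt by auto
    ultimately have "(m', v + 1) \<in> region g g'" using region_step_up[OF inr that] by simp
    moreover have "supports (m, v) (m', v + 1)" using that by auto
    ultimately show False using nomax by blast
  qed
  hence "ht g' (Suc m) \<le> v + 1" "ht g' (m - 1) \<le> v + 1" using m0 by auto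
  moreover have "ht g' (Suc m) = ht g' m + 1 \<or> ht g' (Suc m) = ht g' m - 1"
    using ht_Suc_cases[of m g'] mlt l by simp
  moreover have "ht g' m = ht g' (m - 1) + 1 \<or> ht g' m = ht g' (m - 1) - 1"
    using ht_Suc_cases[of "m - 1" g'] mlt l m0 by simp
  ultimately have "ht g' (Suc m) = ht g' m - 1" "ht g' (m - 1) = ht g' m - 1" "v = ht g' m - 2"
    using v by auto
  thus ?thesis using peakI[of m g'] m0 mlt l a by auto
qed

lemma peak_imp_maximal_region:
  assumes l: "length g = length g'" and pk: "peak g' m" and lt: "ht g m < ht g' m"
  shows "(m, ht g' m - 2) \<in> maximal_elements (region g g') supports"
proof -
  have mlt: "m < length g" using pk l by (simp add: peak_def)
  have "ht g m \<le> ht g' m - 2" using ht_less_imp_le_minus_2[OF _ _ lt] mlt l by simp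
  moreover have "even (ht g' m - 2 - ht g m)" using even_ht_diff[of m g g'] mlt l by simp
  ultimately have "(m, ht g' m - 2) \<in> region g g'" using mlt by (simp add: region_def)
  moreover have "\<not> supports (m, ht g' m - 2) c'" if c': "c' \<in> region g g'" for c'
  proof
    assume r: "supports (m, ht g' m - 2) c'"
    obtain k v where kv: "c' = (k, v)" by (cases c')
    have "v = ht g' m - 1" "k = Suc m \<or> Suc k = m" using r kv by auto
    moreover have "v < ht g' k" using c' kv by (simp add: region_def)
    ultimately show False using peak_ht[OF pk] by auto
  qed
  ultimately show ?thesis by (simp add: maximal_elements_def)
qed

lemma maximal_elements_region:
  assumes g: "g \<in> dyck n" and g': "g' \<in> dyck n"
  shows "maximal_elements (region g g') supports =
    (\<lambda>m. (m, ht g' m - 2)) ` {m. peak g' m \<and> ht g m < ht g' m}"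
  using maximal_region_imp_peak[OF g g'] peak_imp_maximal_region[OF dyck_same_length[OF g g']]
  by fastforce

lemma card_chains_between_Suc_peaks:
  assumes "g' \<in> dyck n"
  shows "card (chains_between n (Suc h) g g') =
    (\<Sum>m\<in>{m. peak g' m \<and> 2 \<le> ht g' m}. card (chains_between n h g (flip_peak g' m)))"
proof -
  have "card (chains_between n (Suc h) g g') =
      (\<Sum>d\<in>flip_peak g' ` {m. peak g' m \<and> 2 \<le> ht g' m}. card (chains_between n h g d))"
    using card_chains_between_Suc covers_eq_flip_peaks[OF assms] by simp
  also have "\<dots> = (\<Sum>m\<in>{m. peak g' m \<and> 2 \<le> ht g' m}. card (chains_between n h g (flip_peak g' m)))"
    by (subst sum.reindex) (auto intro: inj_on_subset[OF inj_on_flip_peak])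
  finally show ?thesis .
qed

lemma peaks_above_subset:
  assumes g: "g \<in> dyck n" and l: "length g = length g'"
  shows "{m. peak g' m \<and> ht g m < ht g' m} \<subseteq> {m. peak g' m \<and> 2 \<le> ht g' m}"
proof
  fix m assume m: "m \<in> {m. peak g' m \<and> ht g m < ht g' m}"
  hence "ht g m \<le> ht g' m - 2" using ht_less_imp_le_minus_2[of m g g'] l by (simp add: peak_def)
  thus "m \<in> {m. peak g' m \<and> 2 \<le> ht g' m}" using m dyck_nonneg[OF g, of m] by simp
qed

text \<open>Going down a cover relation removes a square on which nothing rests, so a saturated chain
  from \<open>g\<close> up to \<open>g'\<close> is the same as a linear extension of the squares between them.\<close>
lemma card_chains_between:
  assumes g: "g \<in> dyck n" and g': "g' \<in> dyck n"
  shows "card (chains_between n h g g') =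
    (if dyck_le g g' \<and> card (region g g') = h then card (linear_extensions (region g g') supports) else 0)"
  using g'
proof (induction h arbitrary: g')
  case 0
  have "dyck_le g g' \<and> card (region g g') = 0 \<longleftrightarrow> g = g'"
    using region_empty_imp_eq[OF dyck_same_length[OF g "0.prems"]] finite_region[of g g']
    by (auto simp: dyck_le_refl region_def)
  moreover have "region g g = {}" by (auto simp: region_def)
  ultimately show ?case using g by (auto simp: chains_between_0)
next
  case (Suc h)
  let ?R = "region g g'" and ?e = "\<lambda>R. card (linear_extensions R supports)"
  let ?top = "\<lambda>m. (m, ht g' m - 2)"
  let ?P = "{m. peak g' m \<and> 2 \<le> ht g' m}" and ?M = "{m. peak g' m \<and> ht g m < ht g' m}"
  have l: "length g = length g'" by (rule dyck_same_length[OF g Suc.prems])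
  have chains_flip: "card (chains_between n h g (flip_peak g' m)) =
      (if dyck_le g g' \<and> m \<in> ?M \<and> card ?R = Suc h then ?e (?R - {?top m}) else 0)"
    if m: "m \<in> ?P" for m
  proof -
    have pk: "peak g' m" using m by simp
    have "card (chains_between n h g (flip_peak g' m)) =
      (if dyck_le g g' \<and> m \<in> ?M \<and> card (?R - {?top m}) = h then ?e (?R - {?top m}) else 0)"
      using Suc.IH[OF flip_peak_dyck[OF Suc.prems pk]] m le_flip_peak_iff[OF l pk]
        region_flip_peak[OF l pk] by auto
    moreover have "?top m \<in> ?R" if "dyck_le g g'" "m \<in> ?M"
      using maximal_elements_region[OF g Suc.prems] that(2)
      by (auto simp: maximal_elements_def)
    ultimately show ?thesis using finite_region[of g g'] card_gt_0_iff[of ?R] by auto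
  qed
  have "card (chains_between n (Suc h) g g') = (\<Sum>m\<in>?P. card (chains_between n h g (flip_peak g' m)))"
    by (rule card_chains_between_Suc_peaks[OF Suc.prems])
  also have "\<dots> = (if dyck_le g g' \<and> card ?R = Suc h then (\<Sum>m\<in>?M. ?e (?R - {?top m})) else 0)"
  proof -
    have "finite ?P" by (rule finite_subset[of _ "{..<length g'}"]) (auto simp: peak_def)
    hence "(\<Sum>m\<in>?P. if m \<in> ?M then ?e (?R - {?top m}) else 0) = (\<Sum>m\<in>?M. ?e (?R - {?top m}))"
      by (simp only: sum.inter_restrict[symmetric] Int_absorb1[OF peaks_above_subset[OF g l]])
    thus ?thesis
      by (cases "dyck_le g g' \<and> card ?R = Suc h") (auto simp: chains_flip intro!: sum.neutral)
  qed
  also have "\<dots> = (if dyck_le g g' \<and> card ?R = Suc h then ?e ?R else 0)"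
  proof (cases "dyck_le g g' \<and> card ?R = Suc h")
    case True
    hence "(\<Sum>m\<in>?M. ?e (?R - {?top m})) = (\<Sum>c\<in>maximal_elements ?R supports. ?e (?R - {c}))"
      using maximal_elements_region[OF g Suc.prems] by (simp add: sum.reindex inj_on_def)
    also have "\<dots> = ?e ?R"
      using card_linear_extensions_rec[OF finite_region, of g g' supports] True by force
    finally show ?thesis using True by simp
  next
    case False thus ?thesis by (simp only: if_False if_not_P)
  qed
  finally show ?case .
qed

lemma sc_eq_sum_linear_extensions:
  "sc h n = (\<Sum>g\<in>dyck n. \<Sum>g'\<in>{g'\<in>dyck n. dyck_le g g' \<and> card (region g g') = h}.
     card (linear_extensions (region g g') supports))"
  unfolding sc_eq_sum_chains_between
  by (rule sum.cong[OF refl]) (simp add: card_chains_between sum.inter_filter[OF finite_dyck])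

section \<open>Skew shapes\<close>

lemma col_ht_Nil [simp]: "col_ht [] x = 0" by (simp add: col_ht_def)

lemma col_ht_Cons:
  "col_ht (s # w) x = (if s = U then 1 else 0) +
     card {j. j < length w \<and> w ! j = U \<and> (if s = D then 1 else 0) + cnt D (take j w) \<le> x}"
proof -
  let ?A = "{j. j < length w \<and> w ! j = U \<and> (if s = D then 1 else 0) + cnt D (take j w) \<le> x}"
  have eq: "{i. i < length (s # w) \<and> (s # w) ! i = U \<and> cnt D (take i (s # w)) \<le> x} =
        (if s = U then {0} else {}) \<union> Suc ` ?A"
  proof (intro set_eqI iffI)
    fix i assume i: "i \<in> {i. i < length (s # w) \<and> (s # w) ! i = U \<and> cnt D (take i (s # w)) \<le> x}"
    show "i \<in> (if s = U then {0} else {}) \<union> Suc ` ?A"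
    proof (cases i)
      case 0 thus ?thesis using i by auto
    next
      case (Suc j)
      have "j \<in> ?A" using i Suc by (cases s) auto
      thus ?thesis using Suc by blast
    qed
  next
    fix i assume i: "i \<in> (if s = U then {0} else {}) \<union> Suc ` ?A"
    show "i \<in> {i. i < length (s # w) \<and> (s # w) ! i = U \<and> cnt D (take i (s # w)) \<le> x}"
    proof (cases "i \<in> Suc ` ?A")
      case True
      then obtain j where "i = Suc j" "j \<in> ?A" by blast
      thus ?thesis by (cases s) auto
    next
      case False thus ?thesis using i by (auto split: if_splits)
    qed
  qed
  have fin: "finite ?A" by simp
  have "card ((if s = U then {0} else {}) \<union> Suc ` ?A) =
      card (if s = U then {0::nat} else {}) + card (Suc ` ?A)"
    by (rule card_Un_disjoint) auto
  also have "card (Suc ` ?A) = card ?A" by (rule card_image) simp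
  finally show ?thesis unfolding col_ht_def eq by simp
qed

lemma col_ht_D: "col_ht (D # w) x = (if x = 0 then 0 else col_ht w (x - 1))"
proof (cases x)
  case 0 thus ?thesis unfolding col_ht_Cons[of D w x] by simp
next
  case (Suc x')
  have "{j. j < length w \<and> w ! j = U \<and> 1 + cnt D (take j w) \<le> x} =
        {j. j < length w \<and> w ! j = U \<and> cnt D (take j w) \<le> x'}" using Suc by auto
  thus ?thesis unfolding col_ht_Cons[of D w x] using Suc by (simp add: col_ht_def)
qed

lemma col_ht_U: "col_ht (U # w) x = Suc (col_ht w x)"
  unfolding col_ht_Cons[of U w x] by (simp add: col_ht_def)

lemma col_ht_mono: "x \<le> x' \<Longrightarrow> col_ht w x \<le> col_ht w x'"
  unfolding col_ht_def by (rule card_mono) auto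

lemma col_ht_le_iff:
  "x < cnt D w \<Longrightarrow> (col_ht w x \<le> y \<longleftrightarrow> Suc x \<le> cnt D (take (x + y + 1) w))"
proof (induction w arbitrary: x y)
  case Nil thus ?case by simp
next
  case (Cons s w)
  show ?case
  proof (cases s)
    case D
    show ?thesis
    proof (cases x)
      case 0 thus ?thesis using D by (simp add: col_ht_D)
    next
      case (Suc x')
      have "x' < cnt D w" using Cons.prems D Suc by simp
      hence "col_ht w x' \<le> y \<longleftrightarrow> Suc x' \<le> cnt D (take (x' + y + 1) w)" by (rule Cons.IH)
      moreover have "take (x + y + 1) (s # w) = D # take (x' + y + 1) w" using Suc D by simp
      ultimately show ?thesis using D Suc by (simp add: col_ht_D)
    qed
  next
    case U
    have xw: "x < cnt D w" using Cons.prems U by simp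
    show ?thesis
    proof (cases y)
      case 0
      have "cnt D (take x w) \<le> x" using cnt_le_length[of D "take x w"] by simp
      thus ?thesis using U 0 by (simp add: col_ht_U)
    next
      case (Suc y')
      have "col_ht w x \<le> y' \<longleftrightarrow> Suc x \<le> cnt D (take (x + y' + 1) w)" by (rule Cons.IH[OF xw])
      moreover have "take (x + y + 1) (s # w) = U # take (x + y' + 1) w" using Suc U by simp
      ultimately show ?thesis using U Suc by (simp add: col_ht_U)
    qed
  qed
qed

lemma less_col_ht_iff:
  "x < cnt D w \<Longrightarrow> (y < col_ht w x \<longleftrightarrow> cnt D (take (x + y + 1) w) \<le> x \<and> x + y + 1 \<le> length w)"
proof (induction w arbitrary: x y)
  case Nil thus ?case by simp
next
  case (Cons s w)
  show ?case
  proof (cases s)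
    case D
    show ?thesis
    proof (cases x)
      case 0 thus ?thesis using D by (simp add: col_ht_D)
    next
      case (Suc x')
      have "x' < cnt D w" using Cons.prems D Suc by simp
      hence "y < col_ht w x' \<longleftrightarrow> cnt D (take (x' + y + 1) w) \<le> x' \<and> x' + y + 1 \<le> length w" by (rule Cons.IH)
      moreover have "take (x + y + 1) (s # w) = D # take (x' + y + 1) w" using Suc D by simp
      ultimately show ?thesis using D Suc by (simp add: col_ht_D)
    qed
  next
    case U
    have xw: "x < cnt D w" using Cons.prems U by simp
    show ?thesis
    proof (cases y)
      case 0
      have "cnt D (take x w) \<le> x" using cnt_le_length[of D "take x w"] by simp
      moreover have "x \<le> length w" using xw cnt_le_length[of D w] by simp
      ultimately show ?thesis using U 0 by (simp add: col_ht_U)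
    next
      case (Suc y')
      have "y' < col_ht w x \<longleftrightarrow> cnt D (take (x + y' + 1) w) \<le> x \<and> x + y' + 1 \<le> length w"
        by (rule Cons.IH[OF xw])
      moreover have "take (x + y + 1) (s # w) = U # take (x + y' + 1) w" using Suc U by simp
      ultimately show ?thesis using U Suc by (simp add: col_ht_U)
    qed
  qed
qed

lemma SkFS_D:
  assumes "(P, Q) \<in> SkFS"
  shows "length P = length Q" "cnt D P = cnt D Q" "P \<noteq> []" "hd P = D" "hd Q = U"
    "\<And>k. 0 < k \<Longrightarrow> k < length P \<Longrightarrow> cnt D (take k P) > cnt D (take k Q)"
  using assms by (auto simp: SkFS_def)

lemma SkFS_ht_end:
  assumes "(P, Q) \<in> SkFS" shows "ht P (length P) = ht Q (length P)"
  using ht_eq_cnt_D[of "length P" P] ht_eq_cnt_D[of "length P" Q] SkFS_D[OF assms] by simp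

lemma SkFS_ht_less:
  assumes "(P, Q) \<in> SkFS" "0 < k" "k < length P"
  shows "ht P k < ht Q k"
  using ht_eq_cnt_D[of k P] ht_eq_cnt_D[of k Q] SkFS_D(1)[OF assms(1)] SkFS_D(6)[OF assms] assms by simp

lemma SkFS_length_ge_2:
  assumes S: "(P, Q) \<in> SkFS" shows "2 \<le> length P"
proof (rule ccontr)
  assume "\<not> 2 \<le> length P"
  moreover have "length P \<noteq> 0" using SkFS_D(3)[OF S] by simp
  ultimately have "length P = 1" "length Q = 1" using SkFS_D(1)[OF S] by arith+
  then obtain a b where "P = [a]" "Q = [b]" by (metis One_nat_def length_0_conv length_Suc_conv)
  thus False using SkFS_D(2,4,5)[OF S] by simp
qed

text \<open>The squares between the two borders of a skew shape, in the coordinates of \<open>region\<close>.\<close>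
definition shape_region :: "step list \<Rightarrow> step list \<Rightarrow> (nat \<times> int) set" where
  "shape_region P Q = {(k, v). 0 < k \<and> k < length P \<and> ht P k \<le> v \<and> v < ht Q k \<and> even (v - ht P k)}"

lemma finite_shape_region: "finite (shape_region P Q)"
proof -
  have "shape_region P Q \<subseteq> (SIGMA k:{..<length P}. {ht P k..<ht Q k})" by (auto simp: shape_region_def)
  thus ?thesis by (rule finite_subset) auto
qed

text \<open>The lower-right corner \<open>(x + 1, y)\<close> of a cell becomes its bottom vertex after rotation: it is
  reached after \<open>x + y + 1\<close> steps, at height \<open>y - x - 1\<close>.\<close>
fun rotate_cell :: "nat \<times> nat \<Rightarrow> nat \<times> int" where
  "rotate_cell (x, y) = (x + y + 1, int y - int x - 1)"

lemma inj_rotate_cell: "inj rotate_cell"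
proof (rule injI)
  fix a b assume "rotate_cell a = rotate_cell b"
  thus "a = b" by (cases a, cases b) auto
qed

lemma rotate_cell_surj:
  assumes "even (int k + v)" "- int k \<le> v" "v + 2 \<le> int k"
  shows "\<exists>x y. rotate_cell (x, y) = (k, v)"
proof -
  obtain j where j: "int k + v = 2 * j" using assms(1) by (rule evenE)
  show ?thesis
    by (rule exI[of _ "nat (int k - j - 1)"], rule exI[of _ "nat j"]) (use j assms in auto)
qed

lemma ht_rotate_cell_iff:
  assumes "x + y + 1 \<le> length w"
  shows "ht w (x + y + 1) \<le> int y - int x - 1 \<longleftrightarrow> Suc x \<le> cnt D (take (x + y + 1) w)"
    and "int y - int x - 1 < ht w (x + y + 1) \<longleftrightarrow> cnt D (take (x + y + 1) w) \<le> x"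
    and "even (int y - int x - 1 - ht w (x + y + 1))"
  using ht_eq_cnt_D[OF assms] by auto

lemma cell_iff_rotate_cell:
  assumes S: "(P, Q) \<in> SkFS"
  shows "(x, y) \<in> cells (P, Q) \<longleftrightarrow> rotate_cell (x, y) \<in> shape_region P Q"
proof
  let ?k = "x + y + 1"
  assume c: "(x, y) \<in> cells (P, Q)"
  hence x: "x < cnt D P" "x < cnt D Q" using SkFS_D(2)[OF S] by (auto simp: cells_def)
  have "Suc x \<le> cnt D (take ?k P)" using col_ht_le_iff[OF x(1)] c by (simp add: cells_def)
  moreover have "cnt D (take ?k Q) \<le> x" "?k \<le> length Q"
    using less_col_ht_iff[OF x(2)] c by (auto simp: cells_def)
  moreover have kP: "?k \<le> length P" using SkFS_D(1)[OF S] calculation by simp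
  ultimately have l: "ht P ?k \<le> int y - int x - 1" "int y - int x - 1 < ht Q ?k"
    using ht_rotate_cell_iff by blast+
  moreover from this have "?k \<noteq> length P" using SkFS_ht_end[OF S] by auto
  ultimately show "rotate_cell (x, y) \<in> shape_region P Q"
    using kP ht_rotate_cell_iff(3)[OF kP] by (simp add: shape_region_def)
next
  let ?k = "x + y + 1"
  assume s: "rotate_cell (x, y) \<in> shape_region P Q"
  hence k: "?k \<le> length P" "?k \<le> length Q" using SkFS_D(1)[OF S] by (auto simp: shape_region_def)
  have P: "Suc x \<le> cnt D (take ?k P)" and Q: "cnt D (take ?k Q) \<le> x"
    using s ht_rotate_cell_iff(1)[OF k(1)] ht_rotate_cell_iff(2)[OF k(2)] by (auto simp: shape_region_def)
  have x: "x < cnt D P" "x < cnt D Q" using P cnt_take_le[of D ?k P] SkFS_D(2)[OF S] by auto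
  show "(x, y) \<in> cells (P, Q)"
    using col_ht_le_iff[OF x(1)] less_col_ht_iff[OF x(2)] P Q k x by (simp add: cells_def)
qed

lemma bij_betw_rotate_cell:
  assumes S: "(P, Q) \<in> SkFS"
  shows "bij_betw rotate_cell (cells (P, Q)) (shape_region P Q)"
proof (rule bij_betw_imageI)
  show "inj_on rotate_cell (cells (P, Q))" using inj_rotate_cell by (rule inj_on_subset) simp
  show "rotate_cell ` cells (P, Q) = shape_region P Q"
  proof
    show "rotate_cell ` cells (P, Q) \<subseteq> shape_region P Q" using cell_iff_rotate_cell[OF S] by auto
    show "shape_region P Q \<subseteq> rotate_cell ` cells (P, Q)"
    proof
      fix z assume z: "z \<in> shape_region P Q"
      obtain k v where kv: "z = (k, v)" by (cases z)
      have kl: "k < length P" "k \<le> length Q" and l: "ht P k \<le> v" "v < ht Q k"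
        and ev: "even (v - ht P k)" using z kv SkFS_D(1)[OF S] by (auto simp: shape_region_def)
      have "even (ht Q k - ht P k)" "even (ht P k + int k)"
        using even_ht_diff[of k P Q] even_ht_plus[of k P] kl by auto
      hence "even (int k + v)" "v + 2 \<le> ht Q k" using ev l(2) by presburger+
      moreover have "- int k \<le> ht P k" "ht Q k \<le> int k" using ht_bounds[of k P] ht_bounds[of k Q] kl by auto
      ultimately obtain x y where "rotate_cell (x, y) = z"
        using rotate_cell_surj[of k v] l(1) kv by force
      thus "z \<in> rotate_cell ` cells (P, Q)" using cell_iff_rotate_cell[OF S, of x y] z by force
    qed
  qed
qed

lemma finite_cells: "finite (cells \<phi>)"
proof -
  have "y < col_ht (snd \<phi>) (cnt D (fst \<phi>))" if "(x, y) \<in> cells \<phi>" for x y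
    using that col_ht_mono[of x "cnt D (fst \<phi>)" "snd \<phi>"] by (auto simp: cells_def)
  hence "cells \<phi> \<subseteq> {..<cnt D (fst \<phi>)} \<times> {..<col_ht (snd \<phi>) (cnt D (fst \<phi>))}"
    by (auto simp: cells_def)
  thus ?thesis by (rule finite_subset) auto
qed

lemma area_eq_card_shape_region:
  assumes S: "(P, Q) \<in> SkFS"
  shows "area (P, Q) = card (shape_region P Q)"
  unfolding area_def by (rule bij_betw_same_card[OF bij_betw_rotate_cell[OF S]])

lemma area_pos:
  assumes S: "(P, Q) \<in> SkFS" shows "0 < area (P, Q)"
proof -
  have l2: "2 \<le> length P" by (rule SkFS_length_ge_2[OF S])
  hence "(1, ht P 1) \<in> shape_region P Q" using SkFS_ht_less[OF S, of 1] by (simp add: shape_region_def)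
  thus ?thesis using finite_shape_region area_eq_card_shape_region[OF S] by (auto simp: card_gt_0_iff)
qed

fun tableau_order :: "nat \<times> nat \<Rightarrow> nat \<times> nat \<Rightarrow> bool" where
  "tableau_order (x, y) (x', y') \<longleftrightarrow> (y = y' \<and> x' < x) \<or> (x = x' \<and> y < y')"

fun tableau_cover :: "nat \<times> nat \<Rightarrow> nat \<times> nat \<Rightarrow> bool" where
  "tableau_cover (x, y) (x', y') \<longleftrightarrow> (y' = y \<and> Suc x' = x) \<or> (x' = x \<and> y' = Suc y)"

lemma tableaux_eq_linear_extensions: "tableaux \<phi> = linear_extensions (cells \<phi>) tableau_order"
proof -
  have "(\<forall>c\<in>cells \<phi>. \<forall>c'\<in>cells \<phi>. tableau_order c c' \<longrightarrow> T c < T c') \<longleftrightarrow>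
        (\<forall>x x' y. (x, y) \<in> cells \<phi> \<and> (x', y) \<in> cells \<phi> \<and> x < x' \<longrightarrow> T (x, y) > T (x', y)) \<and>
        (\<forall>x y y'. (x, y) \<in> cells \<phi> \<and> (x, y') \<in> cells \<phi> \<and> y < y' \<longrightarrow> T (x, y') > T (x, y))" for T
    by auto
  thus ?thesis unfolding tableaux_def linear_extensions_def area_def by blast
qed

lemma cells_row_convex:
  assumes "(x, y) \<in> cells (P, Q)" "(x', y) \<in> cells (P, Q)" "x \<le> x''" "x'' \<le> x'"
  shows "(x'', y) \<in> cells (P, Q)"
  using assms col_ht_mono[OF assms(4), of P] col_ht_mono[OF assms(3), of Q] by (auto simp: cells_def)

lemma tableau_order_imp_cover_trancl:
  assumes "c \<in> cells (P, Q)" "c' \<in> cells (P, Q)" "tableau_order c c'"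
  shows "(\<lambda>x y. x \<in> cells (P, Q) \<and> y \<in> cells (P, Q) \<and> tableau_cover x y)\<^sup>+\<^sup>+ c c'"
proof -
  let ?C = "cells (P, Q)"
  let ?R = "(\<lambda>x y. x \<in> ?C \<and> y \<in> ?C \<and> tableau_cover x y)\<^sup>+\<^sup>+"
  have row: "?R (x + d + 1, y) (x, y)" if "(x + d + 1, y) \<in> ?C" "(x, y) \<in> ?C" for x y d
    using that
  proof (induction d)
    case (Suc d)
    have m: "(x + d + 1, y) \<in> ?C" using cells_row_convex[OF Suc.prems(2,1)] by simp
    hence "?R (x + Suc d + 1, y) (x + d + 1, y)" using Suc.prems by (intro tranclp.r_into_trancl) auto
    thus ?case using Suc.IH m Suc.prems by (auto intro: tranclp_trans)
  qed auto
  have col: "?R (x, y) (x, y + d + 1)" if "(x, y) \<in> ?C" "(x, y + d + 1) \<in> ?C" for x y d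
    using that
  proof (induction d)
    case (Suc d)
    have m: "(x, y + d + 1) \<in> ?C" using Suc.prems by (auto simp: cells_def)
    hence "?R (x, y + d + 1) (x, y + Suc d + 1)" using Suc.prems by (intro tranclp.r_into_trancl) auto
    thus ?case using Suc.IH m Suc.prems by (auto intro: tranclp_trans)
  qed auto
  obtain x y x' y' where c: "c = (x, y)" "c' = (x', y')" by (cases c, cases c')
  show ?thesis
  proof (cases "y = y' \<and> x' < x")
    case True
    then obtain d where "x = x' + d + 1" using less_imp_Suc_add by fastforce
    thus ?thesis using row[of x' d y] assms c True by simp
  next
    case False
    hence "x = x' \<and> y < y'" using assms(3) c by auto
    then obtain d where "y' = y + d + 1" "x = x'" using less_imp_Suc_add by fastforce
    thus ?thesis using col[of x y d] assms c by simp
  qed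
qed

lemma t_eq_card_linear_extensions:
  assumes S: "(P, Q) \<in> SkFS"
  shows "t (P, Q) = card (linear_extensions (shape_region P Q) supports)"
proof -
  have "linear_extensions (cells (P, Q)) tableau_order = linear_extensions (cells (P, Q)) tableau_cover"
  proof (rule equalityI; rule linear_extensions_subset_trancl)
    fix c c' assume "c \<in> cells (P, Q)" "c' \<in> cells (P, Q)" "tableau_cover c c'"
    moreover from this have "tableau_order c c'" by (cases c, cases c') auto
    ultimately show "(\<lambda>x y. x \<in> cells (P, Q) \<and> y \<in> cells (P, Q) \<and> tableau_order x y)\<^sup>+\<^sup>+ c c'"
      by auto
  qed (rule tableau_order_imp_cover_trancl)
  hence "t (P, Q) = card (linear_extensions (cells (P, Q)) tableau_cover)"
    by (simp add: t_def tableaux_eq_linear_extensions)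
  also have "\<dots> = card (linear_extensions (shape_region P Q) supports)"
    by (rule card_linear_extensions_iso[OF bij_betw_rotate_cell[OF S] _ finite_cells]) auto
  finally show ?thesis .
qed

section \<open>Replacing occurrences by upper borders\<close>

abbreviation occ_start :: "nat \<times> nat \<times> nat \<Rightarrow> nat" where "occ_start oc \<equiv> fst oc"
abbreviation occ_len :: "nat \<times> nat \<times> nat \<Rightarrow> nat" where "occ_len oc \<equiv> fst (snd oc)"
abbreviation occ_part :: "nat \<times> nat \<times> nat \<Rightarrow> nat" where "occ_part oc \<equiv> snd (snd oc)"

definition admissible ::
  "step list \<Rightarrow> (nat \<times> nat \<times> nat) set \<Rightarrow> (nat \<times> nat \<times> nat \<Rightarrow> step list \<times> step list) \<Rightarrow> bool" where
  "admissible g Occ \<phi> \<longleftrightarrow> finite Occ \<and>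
     (\<forall>oc\<in>Occ. occ_start oc + occ_len oc \<le> length g) \<and>
     (\<forall>oc\<in>Occ. \<forall>oc'\<in>Occ. oc \<noteq> oc' \<longrightarrow>
        occ_start oc + occ_len oc \<le> occ_start oc' \<or> occ_start oc' + occ_len oc' \<le> occ_start oc) \<and>
     (\<forall>oc\<in>Occ. \<phi> oc \<in> SkFS \<and> fst (\<phi> oc) = factor g (occ_start oc) (occ_len oc) \<and>
        area (\<phi> oc) = occ_part oc)"

definition occ_step :: "nat \<times> nat \<times> nat \<Rightarrow> nat \<Rightarrow> bool" where
  "occ_step oc k \<longleftrightarrow> occ_start oc \<le> k \<and> k < occ_start oc + occ_len oc"

definition occ_inner :: "nat \<times> nat \<times> nat \<Rightarrow> nat \<Rightarrow> bool" where
  "occ_inner oc k \<longleftrightarrow> occ_start oc < k \<and> k < occ_start oc + occ_len oc"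

definition replace_occs ::
  "step list \<Rightarrow> (nat \<times> nat \<times> nat) set \<Rightarrow> (nat \<times> nat \<times> nat \<Rightarrow> step list \<times> step list) \<Rightarrow> step list" where
  "replace_occs g Occ \<phi> = map (\<lambda>i. if \<exists>oc\<in>Occ. occ_step oc i
       then snd (\<phi> (SOME oc. oc \<in> Occ \<and> occ_step oc i)) !
         (i - occ_start (SOME oc. oc \<in> Occ \<and> occ_step oc i))
       else g ! i) [0..<length g]"

definition occ_region ::
  "step list \<Rightarrow> (nat \<times> nat \<times> nat) set \<Rightarrow> (nat \<times> nat \<times> nat \<Rightarrow> step list \<times> step list) \<Rightarrow>
    nat \<times> nat \<times> nat \<Rightarrow> (nat \<times> int) set" where
  "occ_region g Occ \<phi> oc = {c \<in> region g (replace_occs g Occ \<phi>). occ_inner oc (fst c)}"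

fun shift :: "nat \<Rightarrow> int \<Rightarrow> nat \<times> int \<Rightarrow> nat \<times> int" where
  "shift p c (k, v) = (p + k, c + v)"

lemma supports_shift: "supports (shift p c a) (shift p c b) = supports a b"
  by (cases a, cases b) auto

lemma length_replace_occs [simp]: "length (replace_occs g Occ \<phi>) = length g"
  by (simp add: replace_occs_def)

lemma occ_inner_imp_occ_step: "occ_inner oc k \<Longrightarrow> occ_step oc k"
  by (simp add: occ_inner_def occ_step_def)

context
  fixes g Occ \<phi>
  assumes adm: "admissible g Occ \<phi>"
begin

lemma finite_occs: "finite Occ"
  using adm by (simp add: admissible_def)

lemma occ_end_le: "oc \<in> Occ \<Longrightarrow> occ_start oc + occ_len oc \<le> length g"
  using adm by (simp add: admissible_def)

lemma occs_disjoint: "oc \<in> Occ \<Longrightarrow> oc' \<in> Occ \<Longrightarrow> oc \<noteq> oc' \<Longrightarrow>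
    occ_start oc + occ_len oc \<le> occ_start oc' \<or> occ_start oc' + occ_len oc' \<le> occ_start oc"
  using adm by (simp add: admissible_def)

lemma shape_in_SkFS: "oc \<in> Occ \<Longrightarrow> (fst (\<phi> oc), snd (\<phi> oc)) \<in> SkFS"
  using adm unfolding admissible_def prod.collapse by blast

lemma lower_border_shape: "oc \<in> Occ \<Longrightarrow> fst (\<phi> oc) = factor g (occ_start oc) (occ_len oc)"
  using adm by (simp add: admissible_def)

lemma area_shape: "oc \<in> Occ \<Longrightarrow> area (\<phi> oc) = occ_part oc"
  using adm by (simp add: admissible_def)

lemma length_lower_shape: "oc \<in> Occ \<Longrightarrow> length (fst (\<phi> oc)) = occ_len oc"
  using lower_border_shape occ_end_le length_factor by simp

lemma length_upper_shape: "oc \<in> Occ \<Longrightarrow> length (snd (\<phi> oc)) = occ_len oc"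
  using SkFS_D(1)[OF shape_in_SkFS] length_lower_shape by simp

lemma occ_step_unique: "oc \<in> Occ \<Longrightarrow> oc' \<in> Occ \<Longrightarrow> occ_step oc k \<Longrightarrow> occ_step oc' k \<Longrightarrow> oc = oc'"
  using occs_disjoint unfolding occ_step_def by fastforce

lemma nth_replace_occs_in:
  assumes oc: "oc \<in> Occ" and k: "occ_step oc k"
  shows "replace_occs g Occ \<phi> ! k = snd (\<phi> oc) ! (k - occ_start oc)"
proof -
  have "(SOME oc. oc \<in> Occ \<and> occ_step oc k) \<in> Occ \<and> occ_step (SOME oc. oc \<in> Occ \<and> occ_step oc k) k"
    using oc k by (rule someI[of "\<lambda>oc. oc \<in> Occ \<and> occ_step oc k", OF conjI])
  hence "(SOME oc. oc \<in> Occ \<and> occ_step oc k) = oc" using occ_step_unique oc k by blast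
  moreover have "k < length g" using k occ_end_le[OF oc] by (simp add: occ_step_def)
  ultimately show ?thesis using oc k by (auto simp: replace_occs_def)
qed

lemma nth_replace_occs_out:
  "\<not> (\<exists>oc\<in>Occ. occ_step oc k) \<Longrightarrow> k < length g \<Longrightarrow> replace_occs g Occ \<phi> ! k = g ! k"
  by (simp add: replace_occs_def)

lemma factor_replace_occs:
  assumes oc: "oc \<in> Occ"
  shows "factor (replace_occs g Occ \<phi>) (occ_start oc) (occ_len oc) = snd (\<phi> oc)"
proof (rule nth_equalityI)
  have bnd: "occ_start oc + occ_len oc \<le> length (replace_occs g Occ \<phi>)" using occ_end_le[OF oc] by simp
  show "length (factor (replace_occs g Occ \<phi>) (occ_start oc) (occ_len oc)) = length (snd (\<phi> oc))"
    using length_factor[OF bnd] length_upper_shape[OF oc] by simp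
  fix i assume "i < length (factor (replace_occs g Occ \<phi>) (occ_start oc) (occ_len oc))"
  hence "i < occ_len oc" using length_factor[OF bnd] by simp
  thus "factor (replace_occs g Occ \<phi>) (occ_start oc) (occ_len oc) ! i = snd (\<phi> oc) ! i"
    using nth_factor[OF bnd] nth_replace_occs_in[OF oc, of "occ_start oc + i"] by (simp add: occ_step_def)
qed

lemma ht_in_occ:
  assumes oc: "oc \<in> Occ" and k: "occ_start oc \<le> k" "k \<le> occ_start oc + occ_len oc"
  shows "ht g k = ht g (occ_start oc) + ht (fst (\<phi> oc)) (k - occ_start oc)"
  using ht_add_factor[OF occ_end_le[OF oc], of "k - occ_start oc"] k lower_border_shape[OF oc] by simp

lemma ht_replace_occs_in_occ:
  assumes oc: "oc \<in> Occ" and k: "occ_start oc \<le> k" "k \<le> occ_start oc + occ_len oc"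
  shows "ht (replace_occs g Occ \<phi>) k =
    ht (replace_occs g Occ \<phi>) (occ_start oc) + ht (snd (\<phi> oc)) (k - occ_start oc)"
  using ht_add_factor[of "occ_start oc" "occ_len oc" "replace_occs g Occ \<phi>" "k - occ_start oc"]
    occ_end_le[OF oc] k factor_replace_occs[OF oc] by simp

text \<open>Outside the occurrences the two paths agree, because both borders of a shape end at the
  same height.\<close>
lemma ht_replace_occs_out:
  "k \<le> length g \<Longrightarrow> \<forall>oc\<in>Occ. \<not> occ_inner oc k \<Longrightarrow> ht (replace_occs g Occ \<phi>) k = ht g k"
proof (induction k rule: less_induct)
  case (less k)
  let ?G = "replace_occs g Occ \<phi>"
  show ?case
  proof (cases k)
    case (Suc j)
    show ?thesis
    proof (cases "\<exists>oc\<in>Occ. occ_step oc j")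
      case True
      then obtain oc where oc: "oc \<in> Occ" and j: "occ_step oc j" by blast
      have k_end: "k = occ_start oc + occ_len oc"
        using j less.prems(2) oc Suc by (auto simp: occ_step_def occ_inner_def)
      have "\<not> occ_inner oc' (occ_start oc)" if "oc' \<in> Occ" for oc'
        using occ_step_unique[OF that oc, of "occ_start oc"] j by (auto simp: occ_step_def occ_inner_def)
      hence "ht ?G (occ_start oc) = ht g (occ_start oc)"
        using less.IH[of "occ_start oc"] j k_end occ_end_le[OF oc] by (simp add: occ_step_def)
      moreover have "ht (snd (\<phi> oc)) (occ_len oc) = ht (fst (\<phi> oc)) (occ_len oc)"
        using SkFS_ht_end[OF shape_in_SkFS[OF oc]] length_lower_shape[OF oc] by simp
      moreover have "ht ?G k = ht ?G (occ_start oc) + ht (snd (\<phi> oc)) (occ_len oc)"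
        using ht_replace_occs_in_occ[OF oc, of k] k_end by simp
      moreover have "ht g k = ht g (occ_start oc) + ht (fst (\<phi> oc)) (occ_len oc)"
        using ht_in_occ[OF oc, of k] k_end by simp
      ultimately show ?thesis by simp
    next
      case False
      hence "\<forall>oc\<in>Occ. \<not> occ_inner oc j" using occ_inner_imp_occ_step by blast
      hence "ht ?G j = ht g j" using less.IH[of j] less.prems Suc by simp
      thus ?thesis using ht_Suc[of j ?G] ht_Suc[of j g] nth_replace_occs_out[OF False] less.prems Suc
        by simp
    qed
  qed simp
qed

lemma ht_replace_occs_in:
  assumes oc: "oc \<in> Occ" and k: "occ_start oc \<le> k" "k \<le> occ_start oc + occ_len oc"
  shows "ht (replace_occs g Occ \<phi>) k = ht g (occ_start oc) + ht (snd (\<phi> oc)) (k - occ_start oc)"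
proof -
  have "\<not> occ_inner oc' (occ_start oc)" if "oc' \<in> Occ" for oc'
    using occs_disjoint[OF that oc] by (cases "oc' = oc") (auto simp: occ_inner_def)
  thus ?thesis using ht_replace_occs_in_occ[OF oc k] ht_replace_occs_out occ_end_le[OF oc] by simp
qed

lemma ht_less_replace_occs_iff:
  assumes k: "k \<le> length g"
  shows "ht g k < ht (replace_occs g Occ \<phi>) k \<longleftrightarrow> (\<exists>oc\<in>Occ. occ_inner oc k)"
proof
  assume "ht g k < ht (replace_occs g Occ \<phi>) k"
  thus "\<exists>oc\<in>Occ. occ_inner oc k" using ht_replace_occs_out[OF k] by force
next
  assume "\<exists>oc\<in>Occ. occ_inner oc k"
  then obtain oc where oc: "oc \<in> Occ" and i: "occ_inner oc k" by blast
  have kk: "occ_start oc \<le> k" "k \<le> occ_start oc + occ_len oc" using i by (auto simp: occ_inner_def)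
  have "ht (fst (\<phi> oc)) (k - occ_start oc) < ht (snd (\<phi> oc)) (k - occ_start oc)"
    using SkFS_ht_less[OF shape_in_SkFS[OF oc]] i length_lower_shape[OF oc] by (auto simp: occ_inner_def)
  thus "ht g k < ht (replace_occs g Occ \<phi>) k" using ht_replace_occs_in[OF oc kk] ht_in_occ[OF oc kk] by simp
qed

lemma ht_le_replace_occs: "k \<le> length g \<Longrightarrow> ht g k \<le> ht (replace_occs g Occ \<phi>) k"
  using ht_less_replace_occs_iff ht_replace_occs_out by force

lemma replace_occs_dyck:
  assumes g: "g \<in> dyck n"
  shows "replace_occs g Occ \<phi> \<in> dyck n"
proof -
  have "\<forall>oc\<in>Occ. \<not> occ_inner oc (length g)" using occ_end_le by (fastforce simp: occ_inner_def)
  hence "ht (replace_occs g Occ \<phi>) (length g) = 0" using ht_replace_occs_out dyck_end[OF g] by simp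
  moreover have "\<forall>k\<le>length g. ht (replace_occs g Occ \<phi>) k \<ge> 0"
    using ht_le_replace_occs dyck_nonneg[OF g] by (meson order_trans)
  ultimately show ?thesis using g by (simp add: dyck_def)
qed

lemma dyck_le_replace_occs: "dyck_le g (replace_occs g Occ \<phi>)"
  using ht_le_replace_occs by (simp add: dyck_le_def)

lemma region_replace_occs_eq_UN:
  "region g (replace_occs g Occ \<phi>) = (\<Union>oc\<in>Occ. occ_region g Occ \<phi> oc)"
proof
  show "region g (replace_occs g Occ \<phi>) \<subseteq> (\<Union>oc\<in>Occ. occ_region g Occ \<phi> oc)"
  proof
    fix c assume c: "c \<in> region g (replace_occs g Occ \<phi>)"
    obtain m v where mv: "c = (m, v)" by (cases c)
    have "m \<le> length g" "ht g m < ht (replace_occs g Occ \<phi>) m" using c mv by (auto simp: region_def)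
    then obtain oc where "oc \<in> Occ" "occ_inner oc m" using ht_less_replace_occs_iff by blast
    thus "c \<in> (\<Union>oc\<in>Occ. occ_region g Occ \<phi> oc)" using c mv by (auto simp: occ_region_def)
  qed
qed (auto simp: occ_region_def)

lemma occ_regions_disjoint:
  "oc \<in> Occ \<Longrightarrow> oc' \<in> Occ \<Longrightarrow> oc \<noteq> oc' \<Longrightarrow> occ_region g Occ \<phi> oc \<inter> occ_region g Occ \<phi> oc' = {}"
  using occ_step_unique occ_inner_imp_occ_step unfolding occ_region_def by blast

lemma occ_regions_not_supports:
  assumes oc: "oc \<in> Occ" "oc' \<in> Occ" "oc \<noteq> oc'"
    and a: "a \<in> occ_region g Occ \<phi> oc" and b: "b \<in> occ_region g Occ \<phi> oc'"
  shows "\<not> supports a b"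
proof
  assume r: "supports a b"
  obtain m v m' v' where ab: "a = (m, v)" "b = (m', v')" by (cases a, cases b)
  have "occ_inner oc m" "occ_inner oc' m'" using a b ab by (auto simp: occ_region_def)
  moreover have "m' = Suc m \<or> Suc m' = m" using r ab by simp
  ultimately have "occ_step oc m \<and> occ_step oc' m \<or> occ_step oc m' \<and> occ_step oc' m'"
    by (auto simp: occ_inner_def occ_step_def)
  thus False using occ_step_unique[OF oc(1,2)] oc(3) by blast
qed

lemma shift_in_occ_region_iff:
  assumes oc: "oc \<in> Occ" and k: "0 < k" "k < occ_len oc"
  shows "(occ_start oc + k, ht g (occ_start oc) + v) \<in> occ_region g Occ \<phi> oc \<longleftrightarrow>
    (k, v) \<in> shape_region (fst (\<phi> oc)) (snd (\<phi> oc))"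
proof -
  have kk: "occ_start oc \<le> occ_start oc + k" "occ_start oc + k \<le> occ_start oc + occ_len oc"
    using k by auto
  have "occ_start oc + k \<le> length g" using occ_end_le[OF oc] k by simp
  thus ?thesis
    using ht_in_occ[OF oc kk] ht_replace_occs_in[OF oc kk] length_lower_shape[OF oc] k
    by (auto simp: occ_region_def region_def shape_region_def occ_inner_def)
qed

lemma bij_betw_shift_occ_region:
  assumes oc: "oc \<in> Occ"
  shows "bij_betw (shift (occ_start oc) (ht g (occ_start oc)))
    (shape_region (fst (\<phi> oc)) (snd (\<phi> oc))) (occ_region g Occ \<phi> oc)"
proof (rule bij_betw_imageI)
  let ?p = "occ_start oc" and ?c = "ht g (occ_start oc)"
  show "inj_on (shift ?p ?c) (shape_region (fst (\<phi> oc)) (snd (\<phi> oc)))"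
    by (rule inj_onI) auto
  have "z \<in> shift ?p ?c ` shape_region (fst (\<phi> oc)) (snd (\<phi> oc))"
    if z: "z \<in> occ_region g Occ \<phi> oc" for z
  proof -
    obtain m v where mv: "z = (m, v)" by (cases z)
    hence "occ_inner oc m" using z by (simp add: occ_region_def)
    hence k: "m = ?p + (m - ?p)" "0 < m - ?p" "m - ?p < occ_len oc" by (auto simp: occ_inner_def)
    hence "(m - ?p, v - ?c) \<in> shape_region (fst (\<phi> oc)) (snd (\<phi> oc))"
      using shift_in_occ_region_iff[OF oc k(2,3), of "v - ?c"] z mv by simp
    moreover have "z = shift ?p ?c (m - ?p, v - ?c)" using mv k(1) by simp
    ultimately show ?thesis by blast
  qed
  moreover have "(k, v) \<in> shape_region (fst (\<phi> oc)) (snd (\<phi> oc)) \<Longrightarrow> 0 < k \<and> k < occ_len oc" for k v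
    using length_lower_shape[OF oc] by (simp add: shape_region_def)
  ultimately show "shift ?p ?c ` shape_region (fst (\<phi> oc)) (snd (\<phi> oc)) = occ_region g Occ \<phi> oc"
    using shift_in_occ_region_iff[OF oc] by fastforce
qed

lemma card_occ_region: "oc \<in> Occ \<Longrightarrow> card (occ_region g Occ \<phi> oc) = area (\<phi> oc)"
  using bij_betw_same_card[OF bij_betw_shift_occ_region] area_eq_card_shape_region[OF shape_in_SkFS]
  by simp

lemma card_linear_extensions_occ_region:
  "oc \<in> Occ \<Longrightarrow> card (linear_extensions (occ_region g Occ \<phi> oc) supports) = t (\<phi> oc)"
  using card_linear_extensions_iso[OF bij_betw_shift_occ_region _ finite_shape_region,
      of oc supports supports]
    t_eq_card_linear_extensions[OF shape_in_SkFS] by (simp add: supports_shift)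

lemma card_region_replace_occs: "card (region g (replace_occs g Occ \<phi>)) = (\<Sum>oc\<in>Occ. area (\<phi> oc))"
proof -
  have "card (region g (replace_occs g Occ \<phi>)) = (\<Sum>oc\<in>Occ. card (occ_region g Occ \<phi> oc))"
    unfolding region_replace_occs_eq_UN
    by (rule card_UN_disjoint)
      (use finite_occs finite_region[of g "replace_occs g Occ \<phi>"] occ_regions_disjoint in
      \<open>auto simp: occ_region_def\<close>)
  thus ?thesis using card_occ_region by simp
qed

text \<open>Squares of different occurrences are incomparable, so a linear extension of the region is a
  shuffle of linear extensions of the occurrence regions.\<close>
lemma card_linear_extensions_region_replace_occs:
  "card (linear_extensions (region g (replace_occs g Occ \<phi>)) supports) =
    multinomial (\<Sum>oc\<in>Occ. area (\<phi> oc)) (\<lambda>oc. area (\<phi> oc)) Occ * (\<Prod>oc\<in>Occ. t (\<phi> oc))"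
proof -
  have "card (linear_extensions (region g (replace_occs g Occ \<phi>)) supports) =
      multinomial (\<Sum>oc\<in>Occ. card (occ_region g Occ \<phi> oc)) (\<lambda>oc. card (occ_region g Occ \<phi> oc)) Occ *
        (\<Prod>oc\<in>Occ. card (linear_extensions (occ_region g Occ \<phi> oc) supports))"
    unfolding region_replace_occs_eq_UN
    by (rule card_linear_extensions_UN[OF finite_occs])
      (use finite_region[of g "replace_occs g Occ \<phi>"] occ_regions_disjoint occ_regions_not_supports in
        \<open>auto simp: occ_region_def\<close>)
  moreover have
    "multinomial h (\<lambda>oc. card (occ_region g Occ \<phi> oc)) Occ = multinomial h (\<lambda>oc. area (\<phi> oc)) Occ"
    for h unfolding multinomial_def by (simp add: card_occ_region)
  ultimately show ?thesis by (simp add: card_occ_region card_linear_extensions_occ_region)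
qed

end

section \<open>Detours\<close>

definition detour :: "step list \<Rightarrow> step list \<Rightarrow> nat \<Rightarrow> nat \<Rightarrow> bool" where
  "detour g g' p l \<longleftrightarrow> 2 \<le> l \<and> p + l \<le> length g \<and> ht g p = ht g' p \<and> ht g (p + l) = ht g' (p + l) \<and>
     (\<forall>k. p < k \<and> k < p + l \<longrightarrow> ht g k < ht g' k)"

lemma detours_overlap_eq:
  assumes r: "detour g g' p l" and r': "detour g g' p' l'" and ov: "p' < p + l" "p < p' + l'"
  shows "p = p' \<and> l = l'"
proof -
  have "\<not> (p < p' \<and> p' < p + l)" "\<not> (p' < p \<and> p < p' + l')"
    using r r' unfolding detour_def by (metis less_irrefl)+
  hence pp: "p = p'" using ov by linarith
  have "\<not> l < l'" "\<not> l' < l" using r r' pp unfolding detour_def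
    by (metis add_less_cancel_left less_add_same_cancel1 less_irrefl less_le_trans nat_less_le
        zero_less_numeral)+
  thus ?thesis using pp by simp
qed

lemma SkFS_I:
  assumes len: "length P = length Q" "2 \<le> length P" and ends: "ht P (length P) = ht Q (length P)"
    and below: "\<And>k. 0 < k \<Longrightarrow> k < length P \<Longrightarrow> ht P k < ht Q k"
  shows "(P, Q) \<in> SkFS"
proof -
  have "cnt D P = cnt D Q" using ends ht_eq_cnt_D[of "length P" P] ht_eq_cnt_D[of "length P" Q] len by simp
  moreover have "cnt D (take k P) > cnt D (take k Q)" if "0 < k" "k < length P" for k
    using below[OF that] ht_eq_cnt_D[of k P] ht_eq_cnt_D[of k Q] that len by simp
  moreover have ne: "P \<noteq> []" "Q \<noteq> []" using len by auto
  moreover have "ht P 1 = -1" "ht Q 1 = 1"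
    using below[of 1] ht_Suc_cases[of 0 P] ht_Suc_cases[of 0 Q] len ne by auto
  hence "P ! 0 = D" "Q ! 0 = U" using nth_eq_ht[of 0 P] nth_eq_ht[of 0 Q] ne by auto
  ultimately show ?thesis using len by (simp add: SkFS_def hd_conv_nth)
qed

lemma detour_factors_SkFS:
  assumes r: "detour g g' p l" and len: "length g = length g'"
  shows "(factor g p l, factor g' p l) \<in> SkFS"
proof (rule SkFS_I)
  have bnd: "p + l \<le> length g" "p + l \<le> length g'" using r len by (auto simp: detour_def)
  show "length (factor g p l) = length (factor g' p l)" "2 \<le> length (factor g p l)"
    using r length_factor[OF bnd(1)] length_factor[OF bnd(2)] by (auto simp: detour_def)
  have "ht (factor g p l) k = ht g (p + k) - ht g p" "ht (factor g' p l) k = ht g' (p + k) - ht g' p"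
    if "k \<le> l" for k
    using ht_add_factor[OF bnd(1) that] ht_add_factor[OF bnd(2) that] by simp_all
  thus "ht (factor g p l) (length (factor g p l)) = ht (factor g' p l) (length (factor g p l))"
    "\<And>k. 0 < k \<Longrightarrow> k < length (factor g p l) \<Longrightarrow> ht (factor g p l) k < ht (factor g' p l) k"
    using r length_factor[OF bnd(1)] by (auto simp: detour_def)
qed

text \<open>Every point where \<open>g'\<close> is strictly above \<open>g\<close> lies inside a detour: go left and right to
  the nearest common points.\<close>
lemma exists_detour:
  assumes g: "g \<in> dyck n" and g': "g' \<in> dyck n" and le: "dyck_le g g'"
    and k: "k \<le> length g" and lt: "ht g k < ht g' k"
  shows "\<exists>p l. detour g g' p l \<and> p < k \<and> k < p + l"
proof -
  have len: "length g = length g'" by (rule dyck_same_length[OF g g'])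
  have le': "ht g j \<le> ht g' j" if "j \<le> length g" for j using le that by (simp add: dyck_le_def)
  let ?L = "{j. j \<le> k \<and> ht g j = ht g' j}"
  let ?R = "{j. k \<le> j \<and> j \<le> length g \<and> ht g j = ht g' j}"
  define p where "p = Max ?L"
  define q where "q = Min ?R"
  have pL: "p \<in> ?L" unfolding p_def by (intro Max_in) auto
  have qR: "q \<in> ?R" unfolding q_def using k dyck_end[OF g] dyck_end[OF g'] len by (intro Min_in) auto
  have pk: "p < k" and kq: "k < q" using pL qR lt by (auto simp: le_less)
  have "j \<le> p" if "j \<in> ?L" for j using that unfolding p_def by (intro Max_ge) auto
  moreover have "q \<le> j" if "j \<in> ?R" for j using that unfolding q_def by (intro Min_le) auto
  ultimately have "ht g j \<noteq> ht g' j" if "p < j" "j < q" for j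
  proof (cases "j \<le> k")
    case False
    hence "j \<notin> ?R" using that(2) \<open>\<And>j. j \<in> ?R \<Longrightarrow> q \<le> j\<close> by (meson not_le)
    thus ?thesis using False that(2) qR by auto
  qed (use that \<open>\<And>j. j \<in> ?L \<Longrightarrow> j \<le> p\<close> in force)
  hence "ht g j < ht g' j" if "p < j" "j < q" for j
    using that le'[of j] qR by force
  hence "detour g g' p (q - p)" using pk kq pL qR by (auto simp: detour_def)
  thus ?thesis using pk kq by (intro exI[of _ p] exI[of _ "q - p"]) simp
qed

lemma detour_replace_occs:
  assumes adm: "admissible g Occ \<phi>" and oc: "oc \<in> Occ"
  shows "detour g (replace_occs g Occ \<phi>) (occ_start oc) (occ_len oc)"
proof -
  let ?G = "replace_occs g Occ \<phi>"
  have l2: "2 \<le> occ_len oc"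
    using SkFS_length_ge_2[OF shape_in_SkFS[OF adm oc]] length_lower_shape[OF adm oc] by simp
  have "\<not> occ_inner oc' k" if "oc' \<in> Occ" "k = occ_start oc \<or> k = occ_start oc + occ_len oc" for oc' k
  proof
    assume i: "occ_inner oc' k"
    hence "occ_step oc' (k - 1)" "occ_step oc' k"
      using that(2) l2 by (auto simp: occ_inner_def occ_step_def)
    moreover have "occ_step oc k \<or> occ_step oc (k - 1)" using that(2) l2 by (auto simp: occ_step_def)
    ultimately have "oc' = oc" using occ_step_unique[OF adm that(1) oc] by blast
    thus False using i that(2) by (auto simp: occ_inner_def)
  qed
  hence "ht g k = ht ?G k" if "k = occ_start oc \<or> k = occ_start oc + occ_len oc" for k
    using that ht_replace_occs_out[OF adm, of k] occ_end_le[OF adm oc] by auto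
  moreover have "ht g k < ht ?G k" if "occ_start oc < k" "k < occ_start oc + occ_len oc" for k
    using that ht_less_replace_occs_iff[OF adm, of k] occ_end_le[OF adm oc] oc
    by (auto simp: occ_inner_def)
  ultimately show ?thesis using l2 occ_end_le[OF adm oc] by (auto simp: detour_def)
qed

lemma shape_eq_factors:
  assumes adm: "admissible g Occ \<phi>" and oc: "oc \<in> Occ"
  shows "\<phi> oc = (factor g (occ_start oc) (occ_len oc),
    factor (replace_occs g Occ \<phi>) (occ_start oc) (occ_len oc))"
  using lower_border_shape[OF adm oc] factor_replace_occs[OF adm oc] by (metis prod.collapse)

text \<open>The occurrences are the detours of the new path and the shapes are cut out by it, so the
  configuration can be read off from the path.\<close>
lemma replace_occs_inj:
  assumes adm1: "admissible g O1 f1" and adm2: "admissible g O2 f2"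
    and ext: "f1 \<in> extensional O1" "f2 \<in> extensional O2"
    and eq: "replace_occs g O1 f1 = replace_occs g O2 f2"
  shows "O1 = O2 \<and> f1 = f2"
proof -
  have sub: "oc \<in> Ob \<and> fb oc = fa oc"
    if adma: "admissible g Oa fa" and admb: "admissible g Ob fb"
      and eqab: "replace_occs g Oa fa = replace_occs g Ob fb" and oc: "oc \<in> Oa" for Oa Ob fa fb oc
  proof -
    let ?p = "occ_start oc" and ?l = "occ_len oc"
    have ra: "detour g (replace_occs g Ob fb) ?p ?l" using detour_replace_occs[OF adma oc] eqab by simp
    hence "ht g (?p + 1) < ht (replace_occs g Ob fb) (?p + 1)" "?p + 1 \<le> length g" "2 \<le> ?l"
      by (auto simp: detour_def)
    then obtain ob where ob: "ob \<in> Ob" and i: "occ_inner ob (?p + 1)"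
      using ht_less_replace_occs_iff[OF admb, of "?p + 1"] by auto
    have pl: "occ_start ob = ?p" "occ_len ob = ?l"
      using detours_overlap_eq[OF ra detour_replace_occs[OF admb ob]] i \<open>2 \<le> ?l\<close>
      by (auto simp: occ_inner_def)
    hence fab: "fb ob = fa oc" using shape_eq_factors[OF admb ob] shape_eq_factors[OF adma oc] eqab by simp
    hence "occ_part ob = occ_part oc" using area_shape[OF admb ob] area_shape[OF adma oc] by simp
    hence "ob = oc" using pl by (simp add: prod_eq_iff)
    thus ?thesis using ob fab by simp
  qed
  have "O1 = O2"
  proof (intro equalityI subsetI)
    fix x assume "x \<in> O1" thus "x \<in> O2" using sub[OF adm1 adm2 eq] by simp
  next
    fix x assume "x \<in> O2" thus "x \<in> O1" using sub[OF adm2 adm1 eq[symmetric]] by simp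
  qed
  moreover have "f1 x = f2 x" for x
  proof (cases "x \<in> O1")
    case True thus ?thesis using sub[OF adm1 adm2 eq, of x] by simp
  next
    case False
    thus ?thesis using extensional_arb[OF ext(1) False] extensional_arb[OF ext(2), of x] \<open>O1 = O2\<close>
      by simp
  qed
  ultimately show ?thesis by auto
qed

definition detour_occs :: "step list \<Rightarrow> step list \<Rightarrow> (nat \<times> nat \<times> nat) set" where
  "detour_occs g g' = (\<lambda>(p, l). (p, l, area (factor g p l, factor g' p l))) ` {(p, l). detour g g' p l}"

definition detour_shapes :: "step list \<Rightarrow> step list \<Rightarrow> nat \<times> nat \<times> nat \<Rightarrow> step list \<times> step list" where
  "detour_shapes g g' = (\<lambda>oc \<in> detour_occs g g'.
     (factor g (occ_start oc) (occ_len oc), factor g' (occ_start oc) (occ_len oc)))"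

lemma mem_detour_occs: "oc \<in> detour_occs g g' \<longleftrightarrow> detour g g' (occ_start oc) (occ_len oc) \<and>
     occ_part oc = area (factor g (occ_start oc) (occ_len oc), factor g' (occ_start oc) (occ_len oc))"
  unfolding detour_occs_def by (cases oc) auto

lemma admissible_detours:
  assumes len: "length g = length g'"
  shows "admissible g (detour_occs g g') (detour_shapes g g')"
proof -
  have "{(p, l). detour g g' p l} \<subseteq> {..length g} \<times> {..length g}" by (auto simp: detour_def)
  hence "finite (detour_occs g g')" unfolding detour_occs_def by (rule finite_imageI[OF finite_subset]) simp
  moreover have "occ_start oc + occ_len oc \<le> occ_start oc' \<or> occ_start oc' + occ_len oc' \<le> occ_start oc"
    if "oc \<in> detour_occs g g'" "oc' \<in> detour_occs g g'" "oc \<noteq> oc'" for oc oc'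
    using detours_overlap_eq[of g g' "occ_start oc" "occ_len oc" "occ_start oc'" "occ_len oc'"] that
    by (force simp: mem_detour_occs prod_eq_iff)
  ultimately show ?thesis
    using mem_detour_occs detour_factors_SkFS len
    by (auto simp: admissible_def detour_shapes_def detour_def)
qed

lemma replace_detours:
  assumes g: "g \<in> dyck n" and g': "g' \<in> dyck n" and le: "dyck_le g g'"
  shows "replace_occs g (detour_occs g g') (detour_shapes g g') = g'"
proof (rule nth_equalityI)
  have len: "length g = length g'" by (rule dyck_same_length[OF g g'])
  note adm = admissible_detours[OF len]
  show "length (replace_occs g (detour_occs g g') (detour_shapes g g')) = length g'" using len by simp
  fix i assume "i < length (replace_occs g (detour_occs g g') (detour_shapes g g'))"
  hence il: "i < length g" by simp
  show "replace_occs g (detour_occs g g') (detour_shapes g g') ! i = g' ! i"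
  proof (cases "\<exists>oc\<in>detour_occs g g'. occ_step oc i")
    case True
    then obtain oc where oc: "oc \<in> detour_occs g g'" and h: "occ_step oc i" by blast
    have "occ_start oc + occ_len oc \<le> length g'" using occ_end_le[OF adm oc] len by simp
    thus ?thesis using nth_replace_occs_in[OF adm oc h] oc h nth_factor[of "occ_start oc" "occ_len oc" g']
      by (auto simp: detour_shapes_def occ_step_def)
  next
    case False
    have "ht g j = ht g' j" if "j = i \<or> j = Suc i" for j
    proof (rule ccontr)
      assume "ht g j \<noteq> ht g' j"
      moreover have "j \<le> length g" using that il by auto
      ultimately have "ht g j < ht g' j" using le by (simp add: dyck_le_def order_le_neq_trans)
      then obtain p l where r: "detour g g' p l" and "p < j" "j < p + l"
        using exists_detour[OF g g' le \<open>j \<le> length g\<close>] by blast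
      moreover have "(p, l, area (factor g p l, factor g' p l)) \<in> detour_occs g g'"
        using r by (simp add: mem_detour_occs)
      ultimately show False using False that by (force simp: occ_step_def)
    qed
    hence "g ! i = g' ! i" using nth_eq_ht[of i g] nth_eq_ht[of i g'] il len by simp
    thus ?thesis using nth_replace_occs_out[OF adm False il] by simp
  qed
qed

section \<open>Summation over occurrences\<close>

lemma length_le_sum_list: "0 \<notin> set xs \<Longrightarrow> length xs \<le> sum_list (xs :: nat list)"
  by (induction xs) auto

lemma finite_partitions: "finite (partitions h)"
proof -
  have "partitions h \<subseteq> {xs. set xs \<subseteq> {..h} \<and> length xs \<le> h}"
    using member_le_sum_list length_le_sum_list by (fastforce simp: partitions_def)
  moreover have "finite {xs. set xs \<subseteq> {..h} \<and> length xs \<le> h}"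
    by (rule finite_lists_length_le) simp
  ultimately show ?thesis by (rule finite_subset)
qed

lemma partitions_eq_if_mset_eq:
  assumes "mset lam1 = mset lam2" "lam1 \<in> partitions h" "lam2 \<in> partitions h'"
  shows "lam1 = lam2"
proof -
  have "sorted (rev lam1)" "sorted (rev lam2)"
    using assms(2,3) by (simp_all add: partitions_def sorted_wrt_rev)
  moreover have "sort (rev lam2) = rev lam1"
    by (rule properties_for_sort) (use assms(1) calculation in simp_all)
  ultimately show ?thesis by (simp add: sorted_sort_id)
qed

lemma case_prod_part: "(\<lambda>(p, l, a). a) = (\<lambda>oc :: nat \<times> nat \<times> nat. occ_part oc)"
  by (auto simp: fun_eq_iff)

lemma finite_pdo: "finite (pdo g lam)"
proof -
  have "pdo g lam \<subseteq> Pow ({..length g} \<times> {..length g} \<times> set lam)"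
  proof
    fix Occ assume O: "Occ \<in> pdo g lam"
    have "occ_part oc \<in> set lam" if "oc \<in> Occ" for oc
    proof -
      have "finite Occ" and m: "image_mset (\<lambda>oc. occ_part oc) (mset_set Occ) = mset lam"
        using O unfolding pdo_def case_prod_part by simp_all
      have "occ_part oc \<in># image_mset (\<lambda>oc. occ_part oc) (mset_set Occ)"
        using \<open>finite Occ\<close> that by simp
      hence "occ_part oc \<in># mset lam" by (simp only: m)
      thus ?thesis by simp
    qed
    thus "Occ \<in> Pow ({..length g} \<times> {..length g} \<times> set lam)" using O by (fastforce simp: pdo_def)
  qed
  thus ?thesis by (rule finite_subset) simp
qed

definition shapes_at :: "step list \<Rightarrow> nat \<times> nat \<times> nat \<Rightarrow> (step list \<times> step list) set" where
  "shapes_at g = (\<lambda>(p, l, a). {\<psi> \<in> SkFS. lower_border \<psi> = factor g p l \<and> area \<psi> = a})"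

lemma finite_shapes_at: "finite (shapes_at g oc)"
proof -
  have "shapes_at g oc \<subseteq> {factor g (occ_start oc) (occ_len oc)} \<times>
      {Q. set Q \<subseteq> {U, D} \<and> length Q = length (factor g (occ_start oc) (occ_len oc))}"
    using SkFS_D(1) by (cases oc) (fastforce simp: shapes_at_def lower_border_def intro: step.exhaust)
  moreover have "finite ({factor g (occ_start oc) (occ_len oc)} \<times>
      {Q. set Q \<subseteq> {U, D} \<and> length Q = length (factor g (occ_start oc) (occ_len oc))})"
    by (intro finite_SigmaI finite.intros finite_lists_length_eq)
  ultimately show ?thesis by (rule finite_subset)
qed

definition configs ::
  "step list \<Rightarrow> nat \<Rightarrow> ((nat \<times> nat \<times> nat) set \<times> (nat \<times> nat \<times> nat \<Rightarrow> step list \<times> step list)) set" where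
  "configs g h = {(Occ, \<phi>). admissible g Occ \<phi> \<and> \<phi> \<in> extensional Occ \<and> (\<Sum>oc\<in>Occ. occ_part oc) = h}"

lemma sum_occ_part_eq_sum_mset:
  "(\<Sum>oc\<in>Occ. occ_part oc) = sum_mset (image_mset (\<lambda>(p, l, a). a) (mset_set Occ))"
  unfolding case_prod_part by (rule sum_unfold_sum_mset)

lemma pdo_PiE_imp_configs:
  assumes lam: "lam \<in> partitions h" and O: "Occ \<in> pdo g lam" and ph: "\<phi> \<in> PiE Occ (shapes_at g)"
  shows "(Occ, \<phi>) \<in> configs g h"
proof -
  have "\<phi> oc \<in> SkFS \<and> fst (\<phi> oc) = factor g (occ_start oc) (occ_len oc) \<and> area (\<phi> oc) = occ_part oc"
    if "oc \<in> Occ" for oc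
    using ph that by (cases oc) (auto simp: PiE_iff shapes_at_def lower_border_def)
  moreover have "occ_start oc + occ_len oc \<le> occ_start oc' \<or> occ_start oc' + occ_len oc' \<le> occ_start oc"
    if "oc \<in> Occ" "oc' \<in> Occ" "oc \<noteq> oc'" for oc oc'
    using O that unfolding pdo_def by fastforce
  ultimately have "admissible g Occ \<phi>" using O by (auto simp: admissible_def pdo_def)
  moreover have "(\<Sum>oc\<in>Occ. occ_part oc) = h"
    using O lam sum_occ_part_eq_sum_mset[of Occ] by (simp add: pdo_def partitions_def sum_mset_sum_list)
  ultimately show ?thesis using ph by (simp add: configs_def PiE_iff)
qed

lemma configs_imp_pdo_PiE:
  assumes c: "(Occ, \<phi>) \<in> configs g h"
  shows "\<exists>lam\<in>partitions h. Occ \<in> pdo g lam \<and> \<phi> \<in> PiE Occ (shapes_at g)"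
proof -
  have adm: "admissible g Occ \<phi>" and ext: "\<phi> \<in> extensional Occ" and sh: "(\<Sum>oc\<in>Occ. occ_part oc) = h"
    using c by (auto simp: configs_def)
  let ?M = "image_mset (\<lambda>(p, l, a). a) (mset_set Occ)"
  define lam where "lam = rev (sorted_list_of_multiset ?M)"
  have mlam: "mset lam = ?M" by (simp add: lam_def)
  have "0 < occ_part oc" if "oc \<in> Occ" for oc
    using area_pos[OF shape_in_SkFS[OF adm that]] area_shape[OF adm that] by simp
  hence "0 \<notin> (\<lambda>(p, l, a). a) ` Occ" by (force simp: case_prod_beta)
  moreover have "set lam = set_mset ?M" by (simp only: set_mset_mset[symmetric] mlam)
  hence "set lam = (\<lambda>(p, l, a). a) ` Occ" using finite_occs[OF adm] by simp
  ultimately have "0 \<notin> set lam" by simp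
  moreover have "sum_list lam = h"
    using sh sum_occ_part_eq_sum_mset[of Occ] by (simp only: mlam[symmetric] sum_mset_sum_list)
  ultimately have "lam \<in> partitions h" by (simp add: partitions_def lam_def sorted_wrt_rev)
  moreover have "\<phi> oc \<in> shapes_at g oc" if "oc \<in> Occ" for oc
    using shape_in_SkFS[OF adm that] area_shape[OF adm that] lower_border_shape[OF adm that]
    by (cases oc) (simp add: shapes_at_def lower_border_def)
  moreover have "Occ \<in> pdo g lam"
  proof -
    have "\<forall>(p, l, a)\<in>Occ. p + l \<le> length g" using occ_end_le[OF adm] by fastforce
    moreover have "\<forall>(p, l, a)\<in>Occ. \<forall>(p', l', a')\<in>Occ. (p, l, a) \<noteq> (p', l', a') \<longrightarrow>
        p + l \<le> p' \<or> p' + l' \<le> p"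
      using occs_disjoint[OF adm] by fastforce
    moreover have "\<forall>(p, l, a)\<in>Occ. \<exists>\<phi>\<in>SkFS. area \<phi> = a \<and> lower_border \<phi> = factor g p l"
    proof
      fix oc assume oc: "oc \<in> Occ"
      show "case oc of (p, l, a) \<Rightarrow> \<exists>\<phi>\<in>SkFS. area \<phi> = a \<and> lower_border \<phi> = factor g p l"
        using shape_in_SkFS[OF adm oc] area_shape[OF adm oc] lower_border_shape[OF adm oc]
        by (cases oc) (auto simp: lower_border_def)
    qed
    ultimately show ?thesis using finite_occs[OF adm] mlam by (simp add: pdo_def)
  qed
  ultimately show ?thesis using ext by (auto simp: PiE_iff)
qed

lemma Sigma_pdo_PiE_eq_configs:
  "(SIGMA Occ:(\<Union>lam\<in>partitions h. pdo g lam). PiE Occ (shapes_at g)) = configs g h"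
proof (intro set_eqI iffI)
  fix x assume "x \<in> (SIGMA Occ:(\<Union>lam\<in>partitions h. pdo g lam). PiE Occ (shapes_at g))"
  then obtain Occ \<phi> lam where "x = (Occ, \<phi>)" "lam \<in> partitions h" "Occ \<in> pdo g lam"
    "\<phi> \<in> PiE Occ (shapes_at g)" by blast
  thus "x \<in> configs g h" using pdo_PiE_imp_configs by simp
next
  fix x assume x: "x \<in> configs g h"
  obtain Occ \<phi> where "x = (Occ, \<phi>)" by (cases x)
  thus "x \<in> (SIGMA Occ:(\<Union>lam\<in>partitions h. pdo g lam). PiE Occ (shapes_at g))"
    using configs_imp_pdo_PiE x by auto
qed

lemma bij_betw_configs_upper_paths:
  assumes g: "g \<in> dyck n"
  shows "bij_betw (\<lambda>(Occ, \<phi>). replace_occs g Occ \<phi>) (configs g h)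
    {g' \<in> dyck n. dyck_le g g' \<and> card (region g g') = h}"
proof (rule bij_betw_imageI)
  show "inj_on (\<lambda>(Occ, \<phi>). replace_occs g Occ \<phi>) (configs g h)"
  proof (rule inj_onI, clarify)
    fix O1 f1 O2 f2 assume "(O1, f1) \<in> configs g h" "(O2, f2) \<in> configs g h"
      and "replace_occs g O1 f1 = replace_occs g O2 f2"
    thus "O1 = O2 \<and> f1 = f2" by (intro replace_occs_inj) (auto simp: configs_def)
  qed
  have "replace_occs g Occ \<phi> \<in> {g' \<in> dyck n. dyck_le g g' \<and> card (region g g') = h}"
    if "(Occ, \<phi>) \<in> configs g h" for Occ \<phi>
  proof -
    have adm: "admissible g Occ \<phi>" and "(\<Sum>oc\<in>Occ. occ_part oc) = h" using that by (auto simp: configs_def)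
    thus ?thesis using card_region_replace_occs[OF adm] area_shape[OF adm]
      replace_occs_dyck[OF adm g] dyck_le_replace_occs[OF adm] by simp
  qed
  moreover have "g' \<in> (\<lambda>(Occ, \<phi>). replace_occs g Occ \<phi>) ` configs g h"
    if g': "g' \<in> dyck n" "dyck_le g g'" "card (region g g') = h" for g'
  proof -
    have adm: "admissible g (detour_occs g g') (detour_shapes g g')"
      using admissible_detours dyck_same_length[OF g g'(1)] by blast
    have "(\<Sum>oc\<in>detour_occs g g'. occ_part oc) = h"
      using card_region_replace_occs[OF adm] area_shape[OF adm] replace_detours[OF g g'(1,2)] g'(3) by simp
    hence "(detour_occs g g', detour_shapes g g') \<in> configs g h"
      using adm by (simp add: configs_def detour_shapes_def)
    thus ?thesis using replace_detours[OF g g'(1,2)] by force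
  qed
  ultimately show "(\<lambda>(Occ, \<phi>). replace_occs g Occ \<phi>) ` configs g h =
      {g' \<in> dyck n. dyck_le g g' \<and> card (region g g') = h}" by auto
qed

lemma sum_occurrences_eq_sum_upper_paths:
  assumes g: "g \<in> dyck n"
  shows "(\<Sum>lam \<in> partitions h. \<Sum>Occ \<in> pdo g lam. \<Sum>\<phi> \<in> PiE Occ (shapes_at g).
       multinomial h (\<lambda>oc. area (\<phi> oc)) Occ * (\<Prod>oc \<in> Occ. t (\<phi> oc))) =
    (\<Sum>g'\<in>{g' \<in> dyck n. dyck_le g g' \<and> card (region g g') = h}.
       card (linear_extensions (region g g') supports))"
proof -
  let ?F = "\<lambda>Occ \<phi>. multinomial h (\<lambda>oc. area (\<phi> oc)) Occ * (\<Prod>oc \<in> Occ. t (\<phi> oc))"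
  have pdo_disjoint: "pdo g lam \<inter> pdo g lam' = {}"
    if "lam \<in> partitions h" "lam' \<in> partitions h" "lam \<noteq> lam'" for lam lam'
    using that partitions_eq_if_mset_eq[of lam lam' h h] by (auto simp: pdo_def)
  have finite_Occ: "finite Occ" if "Occ \<in> pdo g lam" for Occ lam
    using that by (simp add: pdo_def)
  have "(\<Sum>lam \<in> partitions h. \<Sum>Occ \<in> pdo g lam. \<Sum>\<phi> \<in> PiE Occ (shapes_at g). ?F Occ \<phi>) =
      (\<Sum>Occ \<in> (\<Union>lam\<in>partitions h. pdo g lam). \<Sum>\<phi> \<in> PiE Occ (shapes_at g). ?F Occ \<phi>)"
    by (rule sum.UNION_disjoint[symmetric]) (use finite_partitions finite_pdo pdo_disjoint in auto)
  also have "\<dots> = (\<Sum>(Occ, \<phi>)\<in>(SIGMA Occ:(\<Union>lam\<in>partitions h. pdo g lam). PiE Occ (shapes_at g)). ?F Occ \<phi>)"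
    by (rule sum.Sigma)
      (use finite_partitions finite_pdo finite_shapes_at finite_Occ in \<open>auto intro!: finite_PiE\<close>)
  also have "\<dots> = (\<Sum>(Occ, \<phi>)\<in>configs g h. ?F Occ \<phi>)" unfolding Sigma_pdo_PiE_eq_configs ..
  also have "\<dots> = (\<Sum>(Occ, \<phi>) \<in> configs g h.
      card (linear_extensions (region g (replace_occs g Occ \<phi>)) supports))"
  proof (rule sum.cong[OF refl], clarify)
    fix Occ \<phi> assume "(Occ, \<phi>) \<in> configs g h"
    hence adm: "admissible g Occ \<phi>" and "(\<Sum>oc\<in>Occ. occ_part oc) = h" by (auto simp: configs_def)
    hence "(\<Sum>oc\<in>Occ. area (\<phi> oc)) = h" using area_shape[OF adm] by simp
    thus "?F Occ \<phi> = card (linear_extensions (region g (replace_occs g Occ \<phi>)) supports)"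
      using card_linear_extensions_region_replace_occs[OF adm] by simp
  qed
  also have "\<dots> = (\<Sum>g'\<in>{g' \<in> dyck n. dyck_le g g' \<and> card (region g g') = h}.
      card (linear_extensions (region g g') supports))"
    using sum.reindex_bij_betw[OF bij_betw_configs_upper_paths[OF g, of h],
        of "\<lambda>g'. card (linear_extensions (region g g') supports)"]
    by (simp add: case_prod_beta)
  finally show ?thesis .
qed

theorem mainTheorem1:
  fixes n h :: nat
  assumes "h \<ge> 1"
  shows "sc h n =
    (\<Sum>\<gamma> \<in> dyck n. \<Sum>lam \<in> partitions h. \<Sum>Occ \<in> pdo \<gamma> lam.
       \<Sum>\<phi> \<in> PiE Occ (\<lambda>(p, l, a). {\<psi> \<in> SkFS. lower_border \<psi> = factor \<gamma> p l \<and> area \<psi> = a}).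
         multinomial h (\<lambda>oc. area (\<phi> oc)) Occ * (\<Prod>oc \<in> Occ. t (\<phi> oc)))"
  unfolding sc_eq_sum_linear_extensions
  using sum_occurrences_eq_sum_upper_paths by (simp add: shapes_at_def)

end
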